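(* Let $f:2^V\to\mathbb{Z}_{\ge0}$ be a connectivity function, $T$ a branch decomposition of $f$, $r=uv\in E(T)$, $(r,C_1,C_2,C_3)$ a global $T$-improvement, $R$ the edit set of $(r,C_1,C_2,C_3)$, and $T'$ the refinement of $T$ with $(r,C_1,C_2,C_3)$. Then (1) every node in $R$ has degree 3 in $T$; (2) the nodes of $R$ induce a connected subtree of $T$; and (3) there exists an edge $r'\in E(T')$ such that for every $w\in V(T)\setminus R$ there is a node $w'\in V(T')$ with $T_r[w]=T'_{r'}[w']$.
   Context: A connectivity function $f:2^V\to\mathbb{Z}_{\ge0}$ ($V$ finite) satisfies $f(\emptyset)=0$, $f(X)=f(V\setminus X)$, and $f(X\cup Y)+f(X\cap Y)\le f(X)+f(Y)$. A branch decomposition of $f$ is a tree $T$ whose nodes have degree 1 or 3 with a bijection $L$ from $V$ to its leaves; elements of $V$ are identified with leaves. $T[uv]$ is the set of leaves closer to $u$ than to $v$. For an edge $r$ and node $w$, the $r$-subtree of $w$ is the set of nodes $x$ such that $w$ lies on the unique path from $x$ to the edge $r$ (including $w$), and $T_r[w]$ is the set of leaves in it. For $W\subseteq V$, a $W$-improvement is a tripartition $(C_1,C_2,C_3)$ of $V$ (pairwise disjoint, possibly empty, union $V$) with $f(C_i)<f(W)/2$, $f(C_i\cap W)<f(W)$, $f(C_i\cap(V\setminus W))<f(W)$ for each $i$; width $\max_i f(C_i)$, sum-width $\sum_i f(C_i)$, arity = number of nonempty parts; it is minimum if of minimum width, subject to that minimum arity, subject to those minimum sum-width. For $r=uv$ and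 $W=T[uv]$, a $T$-improvement on $r$ is $(r,C_1,C_2,C_3)$ with $(C_1,C_2,C_3)$ a minimum $W$-improvement; it intersects node $w$ if $T_r[w]$ meets at least two of the $C_i$; it is a global $T$-improvement if it intersects the minimum number of nodes among all $T$-improvements on $r$. The edit set of $(r,C_1,C_2,C_3)$ is the set of nodes $w$ such that $T_r[w]$ intersects at least two of $C_1,C_2,C_3$. The refinement of $(T,L)$ with $(uv,C_1,C_2,C_3)$: for each $i$ take a copy $T_i$ of $T$ with labeling restricted to $C_i$, subdivide the copy $u_iv_i$ of $uv$ with a new node $w_i$, take the disjoint union of $T_1,T_2,T_3$, add a new node $t$ adjacent to $w_1,w_2,w_3$, and then repeatedly delete unlabeled degree-1 nodes and suppress degree-2 nodes. For the refinement $T'$ and an edge $r'$ of it, $T'_{r'}[w']$ is defined analogously. *)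

theory Defs
  imports Main "HOL.Real"
begin

definition adj :: "'n set set \<Rightarrow> 'n \<Rightarrow> 'n \<Rightarrow> bool" where
  "adj E x y \<longleftrightarrow> {x, y} \<in> E \<and> x \<noteq> y"

definition nbrs :: "'n set set \<Rightarrow> 'n \<Rightarrow> 'n set" where
  "nbrs E x = {y. adj E x y}"

definition degree :: "'n set set \<Rightarrow> 'n \<Rightarrow> nat" where
  "degree E x = card (nbrs E x)"

definition is_path :: "'n set set \<Rightarrow> 'n list \<Rightarrow> bool" where
  "is_path E p \<longleftrightarrow> p \<noteq> [] \<and> distinct p \<and>
     (\<forall>i. Suc i < length p \<longrightarrow> adj E (p ! i) (p ! Suc i))"

definition path_betw :: "'n set set \<Rightarrow> 'n list \<Rightarrow> 'n \<Rightarrow> 'n \<Rightarrow> bool" where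
  "path_betw E p x y \<longleftrightarrow> is_path E p \<and> hd p = x \<and> last p = y"

definition is_cycle :: "'n set set \<Rightarrow> 'n list \<Rightarrow> bool" where
  "is_cycle E p \<longleftrightarrow> 3 \<le> length p \<and> is_path E p \<and> adj E (last p) (hd p)"

definition is_graph :: "'n set \<Rightarrow> 'n set set \<Rightarrow> bool" where
  "is_graph N E \<longleftrightarrow> finite N \<and> (\<forall>e\<in>E. \<exists>x y. e = {x, y} \<and> x \<noteq> y \<and> x \<in> N \<and> y \<in> N)"

definition is_tree :: "'n set \<Rightarrow> 'n set set \<Rightarrow> bool" where
  "is_tree N E \<longleftrightarrow> is_graph N E \<and> N \<noteq> {} \<and>
     (\<forall>x\<in>N. \<forall>y\<in>N. \<exists>p. path_betw E p x y) \<and> \<not> (\<exists>p. is_cycle E p)"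

definition connectivity_function :: "'v set \<Rightarrow> ('v set \<Rightarrow> nat) \<Rightarrow> bool" where
  "connectivity_function V f \<longleftrightarrow> f {} = 0 \<and> (\<forall>X. X \<subseteq> V \<longrightarrow> f X = f (V - X)) \<and>
     (\<forall>X Y. X \<subseteq> V \<longrightarrow> Y \<subseteq> V \<longrightarrow> f (X \<union> Y) + f (X \<inter> Y) \<le> f X + f Y)"

definition branch_decomposition :: "'v set \<Rightarrow> 'n set \<Rightarrow> 'n set set \<Rightarrow> ('v \<Rightarrow> 'n) \<Rightarrow> bool" where
  "branch_decomposition V N E L \<longleftrightarrow> is_tree N E \<and>
     (\<forall>x\<in>N. degree E x = 1 \<or> degree E x = 3) \<and>
     bij_betw L V {x \<in> N. degree E x = 1}"

definition closer_leaves :: "'n set set \<Rightarrow> ('v \<Rightarrow> 'n) \<Rightarrow> 'v set \<Rightarrow> 'n \<Rightarrow> 'n \<Rightarrow> 'v set" where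
  "closer_leaves E L V u v = {e \<in> V. \<exists>p. path_betw E p (L e) u \<and>
       (\<forall>q. path_betw E q (L e) v \<longrightarrow> length p < length q)}"

definition path_to_edge :: "'n set set \<Rightarrow> 'n list \<Rightarrow> 'n \<Rightarrow> 'n set \<Rightarrow> bool" where
  "path_to_edge E p x r \<longleftrightarrow> is_path E p \<and> hd p = x \<and> last p \<in> r \<and>
     (\<forall>y \<in> set (butlast p). y \<notin> r)"

definition r_subtree :: "'n set \<Rightarrow> 'n set set \<Rightarrow> 'n set \<Rightarrow> 'n \<Rightarrow> 'n set" where
  "r_subtree N E r w = {x \<in> N. \<exists>p. path_to_edge E p x r \<and> w \<in> set p}"

text \<open>T_r[w]: the leaves (elements of V) in the r-subtree of w.\<close>
definition subtree_leaves :: "'n set \<Rightarrow> 'n set set \<Rightarrow> ('v \<Rightarrow> 'n) \<Rightarrow> 'v set \<Rightarrow> 'n set \<Rightarrow> 'n \<Rightarrow> 'v set" where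
  "subtree_leaves N E L V r w = {e \<in> V. L e \<in> r_subtree N E r w}"

definition improvement :: "'v set \<Rightarrow> ('v set \<Rightarrow> nat) \<Rightarrow> 'v set \<Rightarrow> 'v set \<Rightarrow> 'v set \<Rightarrow> 'v set \<Rightarrow> bool" where
  "improvement V f W C1 C2 C3 \<longleftrightarrow>
     C1 \<inter> C2 = {} \<and> C1 \<inter> C3 = {} \<and> C2 \<inter> C3 = {} \<and> C1 \<union> C2 \<union> C3 = V \<and>
     (\<forall>C \<in> {C1, C2, C3}. real (f C) < real (f W) / 2 \<and>
        f (C \<inter> W) < f W \<and> f (C \<inter> (V - W)) < f W)"

definition width :: "('v set \<Rightarrow> nat) \<Rightarrow> 'v set \<Rightarrow> 'v set \<Rightarrow> 'v set \<Rightarrow> nat" where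
  "width f C1 C2 C3 = max (f C1) (max (f C2) (f C3))"

definition sum_width :: "('v set \<Rightarrow> nat) \<Rightarrow> 'v set \<Rightarrow> 'v set \<Rightarrow> 'v set \<Rightarrow> nat" where
  "sum_width f C1 C2 C3 = f C1 + f C2 + f C3"

definition arity :: "'v set \<Rightarrow> 'v set \<Rightarrow> 'v set \<Rightarrow> nat" where
  "arity C1 C2 C3 = length (filter (\<lambda>C. C \<noteq> {}) [C1, C2, C3])"

definition min_improvement :: "'v set \<Rightarrow> ('v set \<Rightarrow> nat) \<Rightarrow> 'v set \<Rightarrow> 'v set \<Rightarrow> 'v set \<Rightarrow> 'v set \<Rightarrow> bool" where
  "min_improvement V f W C1 C2 C3 \<longleftrightarrow> improvement V f W C1 C2 C3 \<and>
     (\<forall>D1 D2 D3. improvement V f W D1 D2 D3 \<longrightarrow>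
        width f C1 C2 C3 < width f D1 D2 D3 \<or>
        (width f C1 C2 C3 = width f D1 D2 D3 \<and>
          (arity C1 C2 C3 < arity D1 D2 D3 \<or>
           (arity C1 C2 C3 = arity D1 D2 D3 \<and> sum_width f C1 C2 C3 \<le> sum_width f D1 D2 D3))))"

definition T_improvement :: "'v set \<Rightarrow> ('v set \<Rightarrow> nat) \<Rightarrow> 'n set set \<Rightarrow> ('v \<Rightarrow> 'n) \<Rightarrow>
    'n \<Rightarrow> 'n \<Rightarrow> 'v set \<Rightarrow> 'v set \<Rightarrow> 'v set \<Rightarrow> bool" where
  "T_improvement V f E L u v C1 C2 C3 \<longleftrightarrow> {u, v} \<in> E \<and> u \<noteq> v \<and>
     min_improvement V f (closer_leaves E L V u v) C1 C2 C3"

text \<open>Edit set: nodes w such that T_r[w] intersects at least two of C1, C2, C3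
  (equivalently: the nodes intersected by the improvement).\<close>
definition edit_set :: "'v set \<Rightarrow> 'n set \<Rightarrow> 'n set set \<Rightarrow> ('v \<Rightarrow> 'n) \<Rightarrow> 'n set \<Rightarrow>
    'v set \<Rightarrow> 'v set \<Rightarrow> 'v set \<Rightarrow> 'n set" where
  "edit_set V N E L r C1 C2 C3 = {w \<in> N.
     let S = subtree_leaves N E L V r w in
       (S \<inter> C1 \<noteq> {} \<and> S \<inter> C2 \<noteq> {}) \<or> (S \<inter> C1 \<noteq> {} \<and> S \<inter> C3 \<noteq> {}) \<or>
       (S \<inter> C2 \<noteq> {} \<and> S \<inter> C3 \<noteq> {})}"

definition global_T_improvement :: "'v set \<Rightarrow> ('v set \<Rightarrow> nat) \<Rightarrow> 'n set \<Rightarrow> 'n set set \<Rightarrow>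
    ('v \<Rightarrow> 'n) \<Rightarrow> 'n \<Rightarrow> 'n \<Rightarrow> 'v set \<Rightarrow> 'v set \<Rightarrow> 'v set \<Rightarrow> bool" where
  "global_T_improvement V f N E L u v C1 C2 C3 \<longleftrightarrow> T_improvement V f E L u v C1 C2 C3 \<and>
     (\<forall>D1 D2 D3. T_improvement V f E L u v D1 D2 D3 \<longrightarrow>
        card (edit_set V N E L {u, v} C1 C2 C3) \<le> card (edit_set V N E L {u, v} D1 D2 D3))"

text \<open>Nodes of the refined tree: Cp i x is the copy of x in T_i, Sub i is w_i, Ctr is t.\<close>
datatype 'n rnode = Cp nat 'n | Sub nat | Ctr

definition init_nodes :: "'n set \<Rightarrow> 'n rnode set" where
  "init_nodes N = {Cp i x | i x. i \<in> {1, 2, 3} \<and> x \<in> N} \<union> {Sub i | i. i \<in> {1, 2, 3}} \<union> {Ctr}"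

definition init_edges :: "'n set set \<Rightarrow> 'n \<Rightarrow> 'n \<Rightarrow> 'n rnode set set" where
  "init_edges E u v =
     {{Cp i x, Cp i y} | i x y. i \<in> {1, 2, 3} \<and> {x, y} \<in> E \<and> {x, y} \<noteq> {u, v}} \<union>
     {{Cp i u, Sub i} | i. i \<in> {1, 2, 3}} \<union> {{Sub i, Cp i v} | i. i \<in> {1, 2, 3}} \<union>
     {{Sub i, Ctr} | i. i \<in> {1, 2, 3}}"

definition ref_label :: "('v \<Rightarrow> 'n) \<Rightarrow> 'v set \<Rightarrow> 'v set \<Rightarrow> 'v set \<Rightarrow> 'v \<Rightarrow> 'n rnode" where
  "ref_label L C1 C2 C3 e =
     (if e \<in> C1 then Cp 1 (L e) else if e \<in> C2 then Cp 2 (L e) else Cp 3 (L e))"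

inductive reduce_step :: "'a set \<Rightarrow> ('a set \<times> 'a set set) \<Rightarrow> ('a set \<times> 'a set set) \<Rightarrow> bool"
  for Lab :: "'a set" where
  delete: "x \<in> N \<Longrightarrow> x \<notin> Lab \<Longrightarrow> degree E x = 1 \<Longrightarrow>
     reduce_step Lab (N, E) (N - {x}, {e \<in> E. x \<notin> e})"
| suppress: "x \<in> N \<Longrightarrow> nbrs E x = {a, b} \<Longrightarrow> a \<noteq> b \<Longrightarrow>
     reduce_step Lab (N, E) (N - {x}, {e \<in> E. x \<notin> e} \<union> {{a, b}})"

definition reduced :: "'a set \<Rightarrow> 'a set \<Rightarrow> 'a set set \<Rightarrow> bool" where
  "reduced Lab N E \<longleftrightarrow> \<not> (\<exists>x\<in>N. x \<notin> Lab \<and> degree E x = 1) \<and> \<not> (\<exists>x\<in>N. degree E x = 2)"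

definition refinement :: "'v set \<Rightarrow> 'n set \<Rightarrow> 'n set set \<Rightarrow> ('v \<Rightarrow> 'n) \<Rightarrow> 'n \<Rightarrow> 'n \<Rightarrow>
    'v set \<Rightarrow> 'v set \<Rightarrow> 'v set \<Rightarrow> 'n rnode set \<Rightarrow> 'n rnode set set \<Rightarrow> bool" where
  "refinement V N E L u v C1 C2 C3 N' E' \<longleftrightarrow>
     (let Lab = ref_label L C1 C2 C3 ` V in
       (reduce_step Lab)\<^sup>*\<^sup>* (init_nodes N, init_edges E u v) (N', E') \<and> reduced Lab N' E')"

end

theory Submission
  imports Defs
begin

text \<open>A leaf of T has a one-element leaf set, so it cannot meet two parts; hence every edited
  node has degree 3. Leaf sets grow along the path towards r = uv, so the edit set is closed
  under moving towards r, and it contains u and v because no single part contains T[uv] or its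
  complement; thus it is connected through uv.

  A node w outside the edit set has all its leaves in one part C_i, and its copy in T_i survives
  the reduction: a leaf is labelled, and an inner node separates two labels of its own subtree
  from a label in another copy, which keeps its degree at least 3. Deleting and suppressing
  nodes never changes which surviving nodes are connected avoiding a set of surviving nodes, so
  in the refinement the copy of w cuts off exactly the labels of T_r[w] from any edge r' joining
  two different copies.\<close>

section \<open>Reachability, paths and forests\<close>

text \<open>Note that reach_in E S x x holds even for x outside S.\<close>
definition reach_in :: "'n set set \<Rightarrow> 'n set \<Rightarrow> 'n \<Rightarrow> 'n \<Rightarrow> bool" where
  "reach_in E S = (\<lambda>s t. adj E s t \<and> s \<in> S \<and> t \<in> S)\<^sup>*\<^sup>*"

definition forest :: "'n set set \<Rightarrow> bool" where
  "forest E \<longleftrightarrow> (\<forall>a b. {a,b} \<in> E \<longrightarrow> a \<noteq> b \<longrightarrow> \<not> reach_in (E - {{a,b}}) UNIV a b)"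

definition connected_graph :: "'n set \<Rightarrow> 'n set set \<Rightarrow> bool" where
  "connected_graph N E \<longleftrightarrow> (\<forall>a\<in>N. \<forall>b\<in>N. reach_in E UNIV a b)"

lemma adj_sym: "adj E x y \<Longrightarrow> adj E y x"
  by (auto simp: adj_def insert_commute)

lemma adj_mono: "adj E x y \<Longrightarrow> E \<subseteq> E' \<Longrightarrow> adj E' x y"
  by (auto simp: adj_def)

lemma reach_in_refl[simp]: "reach_in E S x x"
  by (simp add: reach_in_def)

lemma reach_in_edge: "adj E x y \<Longrightarrow> x \<in> S \<Longrightarrow> y \<in> S \<Longrightarrow> reach_in E S x y"
  unfolding reach_in_def by (rule r_into_rtranclp) simp

lemma reach_in_trans: "reach_in E S x y \<Longrightarrow> reach_in E S y z \<Longrightarrow> reach_in E S x z"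
  unfolding reach_in_def by simp

lemma reach_in_induct[consumes 1, case_names base step]:
  assumes "reach_in E S a b" "P a"
    and "\<And>y z. reach_in E S a y \<Longrightarrow> adj E y z \<Longrightarrow> y \<in> S \<Longrightarrow> z \<in> S \<Longrightarrow> P y \<Longrightarrow> P z"
  shows "P b"
  using assms(1) unfolding reach_in_def
proof (induction rule: rtranclp_induct)
  case base then show ?case using assms(2) by simp
next
  case (step y z) then show ?case using assms(3)[of y z] unfolding reach_in_def by auto
qed

lemma reach_in_sym: "reach_in E S x y \<Longrightarrow> reach_in E S y x"
  unfolding reach_in_def
proof (induction rule: rtranclp_induct)
  case base then show ?case by simp
next
  case (step y z)
  then show ?case by (metis (mono_tags, lifting) adj_sym converse_rtranclp_into_rtranclp)
qed

lemma reach_in_map: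
  assumes "reach_in E S p q"
    and "\<And>s t. adj E s t \<Longrightarrow> s \<in> S \<Longrightarrow> t \<in> S \<Longrightarrow> reach_in E2 S2 (g s) (g t)"
  shows "reach_in E2 S2 (g p) (g q)"
  using assms(1) unfolding reach_in_def
proof (induction rule: rtranclp_induct)
  case base then show ?case by simp
next
  case (step y z)
  then show ?case using assms(2)[of y z] unfolding reach_in_def by auto
qed

lemma reach_in_mono: "reach_in E S p q \<Longrightarrow> E \<subseteq> E' \<Longrightarrow> S \<subseteq> S' \<Longrightarrow> reach_in E' S' p q"
  using reach_in_map[of E S p q E' S' id]
  by (auto intro: reach_in_edge adj_mono)

lemma reach_in_endpoints: "reach_in E S p q \<Longrightarrow> p \<noteq> q \<Longrightarrow> p \<in> S \<and> q \<in> S"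
  unfolding reach_in_def
  by (metis (mono_tags, lifting) converse_rtranclpE rtranclp.cases)

lemma reach_in_closed:
  assumes "reach_in E S p q" "p \<in> A"
    and "\<And>s t. adj E s t \<Longrightarrow> s \<in> S \<Longrightarrow> t \<in> S \<Longrightarrow> s \<in> A \<Longrightarrow> t \<in> A"
  shows "q \<in> A"
  using assms(1,2) unfolding reach_in_def
proof (induction rule: rtranclp_induct)
  case base then show ?case by simp
next
  case (step y z)
  then show ?case using assms(3) by blast
qed

lemma reach_in_empty: "reach_in {} S a b \<Longrightarrow> a = b"
  by (induction rule: reach_in_induct) (auto simp: adj_def)

lemma adj_remove_edge: "adj (E - {{s,t}}) a b \<longleftrightarrow> adj E a b \<and> {a,b} \<noteq> {s,t}"
  by (auto simp: adj_def)

lemma forestD: "forest E \<Longrightarrow> {a,b} \<in> E \<Longrightarrow> a \<noteq> b \<Longrightarrow> \<not> reach_in (E - {{a,b}}) UNIV a b"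
  unfolding forest_def by blast

lemma is_path_single[simp]: "is_path E [x]"
  by (simp add: is_path_def)

lemma is_path_Cons:
  "is_path E (x # y # p) \<longleftrightarrow> adj E x y \<and> x \<notin> set (y # p) \<and> is_path E (y # p)"
proof
  assume a: "is_path E (x # y # p)"
  then have "adj E x y" unfolding is_path_def by (metis length_Cons nth_Cons_0 nth_Cons_Suc zero_less_Suc Suc_less_eq)
  moreover have "\<forall>i. Suc i < length (y # p) \<longrightarrow> adj E ((y # p) ! i) ((y # p) ! Suc i)"
  proof (intro allI impI)
    fix i assume "Suc i < length (y # p)"
    then have "Suc (Suc i) < length (x # y # p)" by simp
    then show "adj E ((y # p) ! i) ((y # p) ! Suc i)" using a unfolding is_path_def
      by (metis nth_Cons_Suc)
  qed
  ultimately show "adj E x y \<and> x \<notin> set (y # p) \<and> is_path E (y # p)"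
    using a unfolding is_path_def by auto
next
  assume a: "adj E x y \<and> x \<notin> set (y # p) \<and> is_path E (y # p)"
  show "is_path E (x # y # p)" unfolding is_path_def
  proof (intro conjI allI impI)
    show "x # y # p \<noteq> []" by simp
    show "distinct (x # y # p)" using a unfolding is_path_def by auto
    fix i assume i: "Suc i < length (x # y # p)"
    show "adj E ((x # y # p) ! i) ((x # y # p) ! Suc i)"
    proof (cases i)
      case 0 then show ?thesis using a by simp
    next
      case (Suc j)
      then show ?thesis using a i unfolding is_path_def by auto
    qed
  qed
qed

lemma is_path_tl: "is_path E (x # p) \<Longrightarrow> p \<noteq> [] \<Longrightarrow> is_path E p"
  by (cases p) (auto simp: is_path_Cons)

lemma is_path_nonempty: "is_path E p \<Longrightarrow> p \<noteq> []"
  by (simp add: is_path_def)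

lemma is_path_mono: "is_path E p \<Longrightarrow> E \<subseteq> E' \<Longrightarrow> is_path E' p"
  unfolding is_path_def by (auto intro: adj_mono)

lemma is_path_append_right: "is_path E (ys @ zs) \<Longrightarrow> zs \<noteq> [] \<Longrightarrow> is_path E zs"
proof (induction ys)
  case Nil then show ?case by simp
next
  case (Cons a ys)
  then show ?case by (metis append_Cons append_is_Nil_conv is_path_tl)
qed

lemma is_path_snoc:
  "is_path E p \<Longrightarrow> b \<notin> set p \<Longrightarrow> adj E (last p) b \<Longrightarrow> is_path E (p @ [b])"
proof (induction p)
  case Nil then show ?case by (simp add: is_path_def)
next
  case (Cons a p)
  show ?case
  proof (cases p)
    case Nil then show ?thesis using Cons by (simp add: is_path_Cons)
  next
    case (Cons c q)
    then show ?thesis using Cons.prems Cons.IH is_path_Cons[of E a c q] is_path_Cons[of E a c "q @ [b]"]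
      by auto
  qed
qed

lemma reach_in_path_set: "is_path E p \<Longrightarrow> reach_in E (set p) (hd p) (last p)"
proof (induction p)
  case Nil then show ?case by (simp add: is_path_def)
next
  case (Cons a p)
  show ?case
  proof (cases p)
    case Nil then show ?thesis by simp
  next
    case (Cons c q)
    then have "reach_in E (set p) c (last p)" using Cons.IH Cons.prems is_path_tl by fastforce
    then have "reach_in E (set (a # p)) c (last p)" by (rule reach_in_mono) auto
    moreover have "reach_in E (set (a # p)) a c" using Cons.prems Cons
      by (intro reach_in_edge) (auto simp: is_path_Cons)
    ultimately show ?thesis using Cons by (auto intro: reach_in_trans)
  qed
qed

lemma reach_in_imp_path:
  assumes "reach_in E S x z" "x \<in> S"
  shows "\<exists>p. path_betw E p x z \<and> set p \<subseteq> S"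
proof -
  have "reach_in E S x z \<Longrightarrow> x \<in> S \<Longrightarrow> \<exists>p. path_betw E p x z \<and> set p \<subseteq> S"
    unfolding reach_in_def
  proof (induction rule: converse_rtranclp_induct)
    case base then show ?case by (intro exI[of _ "[z]"]) (simp add: path_betw_def)
  next
    case (step x s)
    then obtain p where p: "path_betw E p s z" "set p \<subseteq> S" by auto
    show ?case
    proof (cases "x \<in> set p")
      case True
      then obtain ys zs where pp: "p = ys @ x # zs" by (meson split_list)
      then have "is_path E (x # zs)" using p is_path_append_right unfolding path_betw_def by blast
      then show ?thesis using p pp unfolding path_betw_def by (intro exI[of _ "x # zs"]) auto
    next
      case False
      obtain c q where pq: "p = c # q" using p unfolding path_betw_def is_path_def by (cases p) auto
      have "c = s" using p pq unfolding path_betw_def by simp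
      then have "is_path E (x # p)" using p pq False step unfolding path_betw_def by (auto simp: is_path_Cons)
      then show ?thesis using p pq step False unfolding path_betw_def
        by (intro exI[of _ "x # p"]) auto
    qed
  qed
  then show ?thesis using assms by blast
qed

lemma reach_in_remove_edge:
  assumes "reach_in E (-{x}) s t" "x \<in> e"
  shows "reach_in (E - {e}) UNIV s t"
proof -
  have "reach_in (E - {e}) UNIV (id s') (id t')" if "adj E s' t'" "s' \<in> -{x}" "t' \<in> -{x}" for s' t'
  proof -
    have "{s', t'} \<noteq> e" using that assms(2) by auto
    then show ?thesis using that by (intro reach_in_edge) (auto simp: adj_def)
  qed
  from reach_in_map[OF assms(1) this] show ?thesis by simp
qed

lemma forest_nbrs_separated:
  assumes "forest E" "adj E x a" "adj E x b" "a \<noteq> b"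
  shows "\<not> reach_in E (-{x}) a b"
proof
  assume "reach_in E (-{x}) a b"
  then have "reach_in (E - {{x,a}}) UNIV a b" by (rule reach_in_remove_edge) simp
  moreover have "adj (E - {{x,a}}) b x" using assms(3,4) by (auto simp: adj_def doubleton_eq_iff insert_commute)
  ultimately have "reach_in (E - {{x,a}}) UNIV x a" by (meson UNIV_I reach_in_edge reach_in_trans reach_in_sym)
  then show False using assms(1,2) unfolding forest_def adj_def by blast
qed

lemma path_last_in: "is_path E p \<Longrightarrow> last p \<in> set p"
  using is_path_nonempty last_in_set by blast

lemma is_path_hd_last:
  assumes "is_path E p" "hd p = last p" shows "p = [hd p]"
proof (cases p)
  case Nil then show ?thesis using assms(1) by (simp add: is_path_def)
next
  case (Cons x xs)
  then have "xs = []" using assms last_in_set[of xs] unfolding is_path_def by (cases "xs = []") auto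
  then show ?thesis using Cons by simp
qed

lemma forest_path_unique:
  assumes "forest E"
  shows "is_path E p \<Longrightarrow> is_path E q \<Longrightarrow> hd p = hd q \<Longrightarrow> last p = last q \<Longrightarrow> p = q"
proof (induction p arbitrary: q)
  case Nil then show ?case by (simp add: is_path_def)
next
  case (Cons x p)
  show ?case
  proof (cases p)
    case Nil
    then show ?thesis using is_path_hd_last[OF Cons.prems(2)] Cons.prems by simp
  next
    case (Cons a p')
    have "last q \<noteq> x" using is_path_hd_last[OF Cons.prems(1)] Cons Cons.prems(4) by auto
    then obtain b q' where q: "q = x # b # q'"
      using Cons.prems(3) is_path_nonempty[OF Cons.prems(2)] by (cases q; cases "tl q") auto
    have pa: "is_path E (a # p')" "adj E x a" "x \<notin> set (a # p')"
      using Cons.prems(1) Cons by (auto simp: is_path_Cons)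
    have qb: "is_path E (b # q')" "adj E x b" "x \<notin> set (b # q')"
      using Cons.prems(2) q by (auto simp: is_path_Cons)
    show ?thesis
    proof (cases "a = b")
      case True
      then have "p = b # q'" using Cons.IH[of "b # q'"] Cons.prems pa qb q Cons by simp
      then show ?thesis using q True by simp
    next
      case False
      have "reach_in E (-{x}) a (last (a # p'))"
        using reach_in_path_set[OF pa(1)] pa(3) by (auto elim!: reach_in_mono)
      moreover have "reach_in E (-{x}) b (last (b # q'))"
        using reach_in_path_set[OF qb(1)] qb(3) by (auto elim!: reach_in_mono)
      moreover have "last (a # p') = last (b # q')" using Cons.prems(4) Cons q by simp
      ultimately have "reach_in E (-{x}) a b" by (metis reach_in_sym reach_in_trans)
      then show ?thesis using forest_nbrs_separated[OF assms pa(2) qb(2) False] by blast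
    qed
  qed
qed

lemma path_to_edge_exists:
  "is_path E p \<Longrightarrow> last p \<in> r \<Longrightarrow> \<exists>q. path_to_edge E q (hd p) r \<and> set q \<subseteq> set p"
proof (induction p)
  case Nil then show ?case by (simp add: is_path_def)
next
  case (Cons x p)
  show ?case
  proof (cases "x \<in> r \<or> p = []")
    case True
    then show ?thesis using Cons.prems
      by (intro exI[of _ "[x]"]) (auto simp: path_to_edge_def)
  next
    case False
    then obtain c p' where p: "p = c # p'" by (cases p) auto
    have pp: "is_path E p" "adj E x c" "x \<notin> set p" using Cons.prems p by (auto simp: is_path_Cons)
    obtain q where q: "path_to_edge E q (hd p) r" "set q \<subseteq> set p"
      using Cons.IH pp Cons.prems p by auto
    obtain d q' where qq: "q = d # q'" using q unfolding path_to_edge_def is_path_def by (cases q) auto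
    have "d = c" using q qq p unfolding path_to_edge_def by simp
    then have "is_path E (x # q)" using q qq pp unfolding path_to_edge_def by (auto simp: is_path_Cons)
    moreover have "last (x # q) \<in> r" using q qq unfolding path_to_edge_def by (metis last_ConsR list.distinct(1))
    moreover have "\<forall>y\<in>set (butlast (x # q)). y \<notin> r"
      using q qq False unfolding path_to_edge_def by auto
    ultimately show ?thesis using q by (intro exI[of _ "x # q"]) (auto simp: path_to_edge_def)
  qed
qed

lemma path_to_edge_unique:
  assumes "forest E" "adj E a b" "path_to_edge E p x {a, b}" "path_to_edge E q x {a, b}"
  shows "p = q"
proof -
  have P: "is_path E p" "hd p = x" "last p \<in> {a,b}" "\<forall>y\<in>set (butlast p). y \<notin> {a,b}"
    and Q: "is_path E q" "hd q = x" "last q \<in> {a,b}" "\<forall>y\<in>set (butlast q). y \<notin> {a,b}"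
    using assms(3,4) unfolding path_to_edge_def by auto
  have gen: False if P: "is_path E p" "hd p = x" "last p = c" "\<forall>y\<in>set (butlast p). y \<notin> {c,d}"
    and Q: "is_path E q" "hd q = x" "last q = d" "\<forall>y\<in>set (butlast q). y \<notin> {c,d}"
    and cd: "adj E c d" for p q c d
  proof -
    have ne: "p \<noteq> []" using P is_path_nonempty by auto
    have "d \<notin> set p"
    proof
      assume "d \<in> set p"
      then have "d \<in> set (butlast p) \<or> d = last p" using ne
        by (metis append_butlast_last_id rotate1.simps(2) set_ConsD set_rotate1)
      then show False using P cd by (auto simp: adj_def)
    qed
    then have "is_path E (p @ [d])" using is_path_snoc[OF P(1)] P(3) cd by simp
    then have "p @ [d] = q" using forest_path_unique[OF assms(1)] Q P ne by auto
    then have "c \<in> set (butlast q)" using P(3) ne by auto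
    then show False using Q(4) by auto
  qed
  show ?thesis
  proof (cases "last p = last q")
    case True then show ?thesis using forest_path_unique[OF assms(1) P(1) Q(1)] P Q by simp
  next
    case False
    then have "(last p = a \<and> last q = b) \<or> (last p = b \<and> last q = a)" using P Q by auto
    then show ?thesis
    proof
      assume h: "last p = a \<and> last q = b"
      show ?thesis using gen[where p=p and c=a and q=q and d=b] P Q h assms(2) by auto
    next
      assume h: "last p = b \<and> last q = a"
      show ?thesis using gen[where p=p and c=b and q=q and d=a] P Q h adj_sym[OF assms(2)] by (auto simp: insert_commute)
    qed
  qed
qed

lemma adj_in_nodes: "is_graph N E \<Longrightarrow> adj E x y \<Longrightarrow> x \<in> N \<and> y \<in> N"
  unfolding is_graph_def adj_def by (metis doubleton_eq_iff)

lemma reach_in_nodes: "is_graph N E \<Longrightarrow> reach_in E S x z \<Longrightarrow> x \<in> N \<Longrightarrow> z \<in> N"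
  by (erule reach_in_closed) (auto dest: adj_in_nodes)

lemma nbrs_subset: "is_graph N E \<Longrightarrow> nbrs E x \<subseteq> N"
  unfolding nbrs_def by (auto dest: adj_in_nodes)

lemma finite_nbrs: "is_graph N E \<Longrightarrow> finite (nbrs E x)"
  using nbrs_subset is_graph_def finite_subset by metis

lemma connected_path_to_edge:
  assumes "connected_graph N E" "x \<in> N" "c \<in> N" "c \<in> r"
  shows "\<exists>p. path_to_edge E p x r"
proof -
  obtain p where "path_betw E p x c" using reach_in_imp_path[of E UNIV x c] assms unfolding connected_graph_def by auto
  then show ?thesis using path_to_edge_exists[of E p r] assms unfolding path_betw_def by auto
qed

lemma path_to_edge_through_separates:
  assumes A: "forest E" and cd: "adj E c d" and p: "path_to_edge E p x {c,d}" "y \<in> set p" "x \<noteq> y"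
  shows "\<not> reach_in E (-{y}) x c"
proof
  assume r: "reach_in E (-{y}) x c"
  have "x \<in> -{y}" using p(3) by simp
  then obtain q where q: "path_betw E q x c" "set q \<subseteq> -{y}" using reach_in_imp_path[OF r] by auto
  obtain q' where q': "path_to_edge E q' x {c,d}" "set q' \<subseteq> set q"
    using path_to_edge_exists[of E q "{c,d}"] q unfolding path_betw_def by auto
  have "p = q'" using path_to_edge_unique[OF A cd p(1) q'(1)] .
  then show False using p(2) q q' by auto
qed

lemma path_to_edge_avoiding_reach:
  assumes cd: "adj E c d" and p: "path_to_edge E p x {c,d}" "y \<notin> set p" and y: "y \<noteq> c"
  shows "reach_in E (-{y}) x c"
proof -
  have pp: "is_path E p" "hd p = x" "last p \<in> {c,d}" using p(1) unfolding path_to_edge_def by auto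
  have "reach_in E (-{y}) x (last p)" using reach_in_path_set[OF pp(1)] pp(2) p(2)
    by (auto elim!: reach_in_mono)
  moreover have "reach_in E (-{y}) (last p) c"
  proof (cases "last p = c")
    case False
    then have "last p = d" using pp by auto
    then show ?thesis using p(2) path_last_in[OF pp(1)] y adj_sym[OF cd] by (intro reach_in_edge) auto
  qed simp
  ultimately show ?thesis by (rule reach_in_trans)
qed

lemma r_subtree_eq:
  assumes G: "is_graph N E" and A: "forest E" and C: "connected_graph N E" and r: "{c,d} \<in> E" "c \<noteq> d"
    and y: "y \<in> N" "c \<noteq> y"
  shows "r_subtree N E {c,d} y = {x \<in> N. x = y \<or> \<not> reach_in E (-{y}) x c}"
proof -
  have cd: "adj E c d" using r by (simp add: adj_def)
  have cN: "c \<in> N" using adj_in_nodes[OF G cd] by auto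
  show ?thesis
  proof (intro equalityI subsetI)
    fix x assume "x \<in> r_subtree N E {c,d} y"
    then obtain p where x: "x \<in> N" and p: "path_to_edge E p x {c,d}" "y \<in> set p"
      unfolding r_subtree_def by auto
    then show "x \<in> {x \<in> N. x = y \<or> \<not> reach_in E (-{y}) x c}"
      using path_to_edge_through_separates[OF A cd p] by auto
  next
    fix x assume x: "x \<in> {x \<in> N. x = y \<or> \<not> reach_in E (-{y}) x c}"
    obtain p where p: "path_to_edge E p x {c,d}" using connected_path_to_edge[OF C, of x c "{c,d}"] x cN by auto
    have "y \<in> set p"
    proof (rule ccontr)
      assume ny: "y \<notin> set p"
      have "p \<noteq> []" "hd p = x" using p is_path_nonempty unfolding path_to_edge_def by auto
      then have "x \<noteq> y" using ny hd_in_set by fastforce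
      then show False using path_to_edge_avoiding_reach[OF cd p ny] y(2) x by auto
    qed
    then show "x \<in> r_subtree N E {c,d} y" using x p unfolding r_subtree_def by auto
  qed
qed

lemma tree_forest: assumes "is_tree N E" shows "forest E"
  unfolding forest_def
proof (intro allI impI notI)
  fix a b assume ab: "{a,b} \<in> E" "a \<noteq> b" and r: "reach_in (E - {{a,b}}) UNIV a b"
  obtain p where p: "path_betw (E - {{a,b}}) p a b" using reach_in_imp_path[OF r] by auto
  obtain x y p' where pp: "p = x # y # p'"
    using p ab unfolding path_betw_def is_path_def by (cases p; cases "tl p") auto
  have x: "x = a" using p pp unfolding path_betw_def by simp
  have "p' \<noteq> []"
  proof
    assume "p' = []"
    then have "adj (E - {{a,b}}) a b" using p pp x unfolding path_betw_def by (auto simp: is_path_Cons)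
    then show False by (auto simp: adj_def)
  qed
  then have "3 \<le> length p" using pp by (cases p') auto
  moreover have "is_path E p" using p is_path_mono unfolding path_betw_def by blast
  moreover have "adj E (last p) (hd p)" using p ab unfolding path_betw_def
    by (auto simp: adj_def insert_commute)
  ultimately have "is_cycle E p" unfolding is_cycle_def by simp
  then show False using assms unfolding is_tree_def by blast
qed

lemma tree_connected: assumes "is_tree N E" shows "connected_graph N E"
  unfolding connected_graph_def
proof (intro ballI)
  fix a b assume "a \<in> N" "b \<in> N"
  then obtain p where "path_betw E p a b" using assms unfolding is_tree_def by blast
  then show "reach_in E UNIV a b" using reach_in_path_set[of E p] unfolding path_betw_def
    by (auto elim!: reach_in_mono)
qed

lemma reach_in_avoid_leaf:
  assumes "nbrs E w = {a}" "reach_in E UNIV x z" "x \<noteq> w" "z \<noteq> w"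
  shows "reach_in E (-{w}) x z"
proof -
  have aw: "adj E w a" using assms(1) unfolding nbrs_def by auto
  then have "a \<noteq> w" by (auto simp: adj_def)
  define g where "g s = (if s = w then a else s)" for s
  have stp: "reach_in E (-{w}) (g s) (g t)" if "adj E s t" "s \<in> UNIV" "t \<in> UNIV" for s t
  proof -
    consider "s = w" | "t = w" | "s \<noteq> w" "t \<noteq> w" by auto
    then show ?thesis
    proof cases
      case 1
      then have "t = a" using assms(1) that unfolding nbrs_def by auto
      then show ?thesis using 1 g_def by simp
    next
      case 2
      then have "s = a" using assms(1) adj_sym[OF that(1)] unfolding nbrs_def by auto
      then show ?thesis using 2 g_def by simp
    next
      case 3 then show ?thesis using that(1) g_def by (auto intro: reach_in_edge)
    qed
  qed
  have "reach_in E (-{w}) (g x) (g z)" by (rule reach_in_map[OF assms(2) stp])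
  then show ?thesis using assms(3,4) g_def by simp
qed

lemma reach_in_last_neighbour:
  assumes "reach_in E UNIV l y" "l \<noteq> y"
  shows "\<exists>n. adj E n y \<and> reach_in E (-{y}) l n"
proof -
  have "(t \<noteq> y \<and> reach_in E (-{y}) l t) \<or> (\<exists>n. adj E n y \<and> reach_in E (-{y}) l n)"
    if "reach_in E UNIV l t" for t
    using that
  proof (induction rule: reach_in_induct)
    case base then show ?case using assms(2) by simp
  next
    case (step s t)
    then show ?case
    proof (cases "t = y")
      case True then show ?thesis using step by auto
    next
      case False
      then show ?thesis using step
        by (auto intro: reach_in_trans reach_in_edge)
    qed
  qed
  from this[OF assms(1)] show ?thesis by auto
qed

lemma reach_in_split:
  assumes "reach_in E (-{a}) b z" "b \<noteq> a" "b \<noteq> w"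
  shows "reach_in E (-{a,w}) b z \<or> reach_in E (-{a}) b w"
  using assms(1)
proof (induction rule: reach_in_induct)
  case base then show ?case by simp
next
  case (step s t)
  show ?case
  proof (cases "reach_in E (-{a,w}) b s")
    case True
    have "s \<noteq> w"
    proof
      assume "s = w"
      then show False using True reach_in_endpoints[OF True] assms by auto
    qed
    show ?thesis
    proof (cases "t = w")
      case True
      have "reach_in E (-{a}) b s" using \<open>reach_in E (-{a,w}) b s\<close> by (rule reach_in_mono) auto
      then show ?thesis using step True by (auto intro: reach_in_trans reach_in_edge)
    next
      case False
      have "reach_in E (-{a,w}) s t" using step False \<open>s \<noteq> w\<close> by (intro reach_in_edge) auto
      then show ?thesis using True by (auto intro: reach_in_trans)
    qed
  next
    case False
    then show ?thesis using step by auto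
  qed
qed

lemma forest_leaf_behind:
  assumes G: "is_graph N E" and A: "forest E"
  shows "adj E w a \<Longrightarrow> \<exists>z. reach_in E (-{w}) a z \<and> card (nbrs E z) \<le> 1"
proof (induction "card {z. reach_in E (-{w}) a z}" arbitrary: w a rule: less_induct)
  case less
  define S where "S = {z. reach_in E (-{w}) a z}"
  have aN: "a \<in> N" using adj_in_nodes[OF G less.prems] by auto
  have SN: "S \<subseteq> N" unfolding S_def using reach_in_nodes[OF G _ aN] by auto
  have fS: "finite S" using SN G finite_subset unfolding is_graph_def by auto
  show ?case
  proof (cases "card (nbrs E a) \<le> 1")
    case True then show ?thesis by (intro exI[of _ a]) simp
  next
    case False
    then obtain b where b: "b \<in> nbrs E a" "b \<noteq> w"
      by (metis One_nat_def card.infinite card_le_Suc0_iff_eq zero_le_one)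
    have ab: "adj E a b" using b unfolding nbrs_def by simp
    have wa: "w \<noteq> a" "a \<noteq> b" using less.prems ab by (auto simp: adj_def)
    define S' where "S' = {z. reach_in E (-{a}) b z}"
    have sub: "S' \<subseteq> S"
    proof
      fix z assume "z \<in> S'"
      then have z: "reach_in E (-{a}) b z" unfolding S'_def by simp
      have "b \<noteq> a" using wa by auto
      from reach_in_split[OF z this b(2)] show "z \<in> S"
      proof
        assume h: "reach_in E (-{a,w}) b z"
        have "reach_in E (-{w}) a b" using ab wa b by (intro reach_in_edge) auto
        moreover have "reach_in E (-{w}) b z" using h by (rule reach_in_mono) auto
        ultimately show ?thesis unfolding S_def by (auto intro: reach_in_trans)
      next
        assume h: "reach_in E (-{a}) b w"
        show ?thesis using forest_nbrs_separated[OF A ab adj_sym[OF less.prems]] h b by simp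
      qed
    qed
    have "a \<in> S" unfolding S_def by simp
    moreover have "a \<notin> S'" unfolding S'_def using reach_in_endpoints[of E "-{a}" b a] wa by auto
    ultimately have "card S' < card S" using sub fS by (metis psubsetI psubset_card_mono)
    then obtain z where z: "reach_in E (-{a}) b z" "card (nbrs E z) \<le> 1"
      using less.hyps[OF _ ab] unfolding S_def S'_def by blast
    then have "z \<in> S" using sub unfolding S'_def by auto
    then show ?thesis using z unfolding S_def by auto
  qed
qed

lemma path_in_nodes: "is_graph N E \<Longrightarrow> is_path E p \<Longrightarrow> hd p \<in> N \<Longrightarrow> set p \<subseteq> N"
proof (induction p)
  case Nil then show ?case by simp
next
  case (Cons x p)
  show ?case
  proof (cases p)
    case Nil then show ?thesis using Cons by simp
  next
    case (Cons y p')
    then have "adj E x y" "is_path E p" using Cons.prems(2) by (auto simp: is_path_Cons)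
    then have "y \<in> N" using adj_in_nodes[OF Cons.prems(1)] by auto
    then show ?thesis using Cons.IH[OF Cons.prems(1) \<open>is_path E p\<close>] Cons Cons.prems by auto
  qed
qed

lemma path_to_edge_suffix:
  assumes "path_to_edge E (q1 @ x # q2) x' r"
  shows "path_to_edge E (x # q2) x r"
proof -
  have "is_path E (x # q2)" using assms is_path_append_right unfolding path_to_edge_def by blast
  moreover have "last (x # q2) \<in> r" using assms unfolding path_to_edge_def by simp
  moreover have "set (butlast (x # q2)) \<subseteq> set (butlast (q1 @ x # q2))"
    by (simp add: butlast_append)
  ultimately show ?thesis using assms unfolding path_to_edge_def by auto
qed

lemma forest_mono: "forest E \<Longrightarrow> E2 \<subseteq> E \<Longrightarrow> forest E2"
  unfolding forest_def by (meson Diff_mono order_refl reach_in_mono subsetD)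

lemma degree_1_nbrs: "degree E x = 1 \<Longrightarrow> \<exists>a. nbrs E x = {a}"
  unfolding degree_def by (meson card_1_singletonE)

definition side :: "'n set set \<Rightarrow> 'n \<Rightarrow> 'n \<Rightarrow> 'n set" where
  "side E w a = {x. reach_in E (-{w}) a x}"

lemma side_not_centre: "a \<noteq> w \<Longrightarrow> w \<notin> side E w a"
  unfolding side_def using reach_in_endpoints by fastforce

lemma side_closed:
  assumes "x \<in> side E w a" "a \<noteq> w" "adj E x z" "z \<noteq> w"
  shows "z \<in> side E w a"
proof -
  have "x \<noteq> w" using assms(1,2) side_not_centre by metis
  then have "reach_in E (-{w}) x z" using assms(3,4) by (intro reach_in_edge) auto
  then show ?thesis using reach_in_trans[of E "-{w}" a x z] assms(1) unfolding side_def by simp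
qed

lemma forest_sides_disjoint:
  assumes "forest E" "adj E w a" "adj E w b" "a \<noteq> b"
  shows "side E w a \<inter> side E w b = {}"
proof (rule equals0I)
  fix x assume "x \<in> side E w a \<inter> side E w b"
  then have "reach_in E (-{w}) a x" "reach_in E (-{w}) x b" using reach_in_sym unfolding side_def by auto
  then have "reach_in E (-{w}) a b" by (rule reach_in_trans)
  then show False using forest_nbrs_separated[OF assms] by simp
qed

lemma forest_two_sides_avoiding:
  assumes "forest E" "card (nbrs E w) = 3"
  obtains a b where "adj E w a" "adj E w b" "a \<noteq> b" "x \<notin> side E w a" "x \<notin> side E w b"
proof -
  obtain a1 a2 a3 where n3: "nbrs E w = {a1,a2,a3}" "a1 \<noteq> a2" "a2 \<noteq> a3" "a1 \<noteq> a3"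
    using assms(2) card_3_iff by metis
  then have adj: "adj E w a1" "adj E w a2" "adj E w a3" unfolding nbrs_def by auto
  have disj: "x \<notin> side E w a" if "x \<in> side E w b" "adj E w a" "adj E w b" "a \<noteq> b" for a b
    using forest_sides_disjoint[OF assms(1) that(3,2)] that(1,4) by auto
  consider "x \<notin> side E w a1" "x \<notin> side E w a2" | "x \<in> side E w a1" | "x \<in> side E w a2" by blast
  then show thesis
  proof cases
    case 1 then show ?thesis using that[of a1 a2] adj n3 by auto
  next
    case 2 then show ?thesis using that[of a2 a3] disj[of a1] adj n3 by auto
  next
    case 3 then show ?thesis using that[of a1 a3] disj[of a2] adj n3 by auto
  qed
qed

section \<open>Deleting and suppressing nodes\<close>

lemma delete_graph: "is_graph N E \<Longrightarrow> is_graph (N - {x}) {e \<in> E. x \<notin> e}"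
  unfolding is_graph_def by fastforce

lemma delete_reach_in:
  assumes "nbrs E x = {a}" "Y \<subseteq> N - {x}" "p \<in> N - {x}" "q \<in> N - {x}"
  shows "reach_in {e \<in> E. x \<notin> e} (-Y) p q \<longleftrightarrow> reach_in E (-Y) p q"
proof
  assume "reach_in {e \<in> E. x \<notin> e} (-Y) p q"
  then show "reach_in E (-Y) p q" by (rule reach_in_mono) auto
next
  assume h: "reach_in E (-Y) p q"
  define g where "g s = (if s = x then a else s)" for s
  have stp: "reach_in {e \<in> E. x \<notin> e} (-Y) (g s) (g t)" if "adj E s t" "s \<in> -Y" "t \<in> -Y" for s t
  proof -
    consider "s = x" | "t = x" | "s \<noteq> x" "t \<noteq> x" by auto
    then show ?thesis
    proof cases
      case 1
      then have "t = a" using assms(1) that(1) unfolding nbrs_def by auto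
      then show ?thesis using 1 g_def by simp
    next
      case 2
      then have "s = a" using assms(1) adj_sym[OF that(1)] unfolding nbrs_def by auto
      then show ?thesis using 2 g_def by simp
    next
      case 3 then show ?thesis using that g_def by (intro reach_in_edge) (auto simp: adj_def)
    qed
  qed
  have "reach_in {e \<in> E. x \<notin> e} (-Y) (g p) (g q)" by (rule reach_in_map[OF h stp])
  then show "reach_in {e \<in> E. x \<notin> e} (-Y) p q" using assms(3,4) g_def by simp
qed

lemma delete_nbrs: "nbrs {e \<in> E. x \<notin> e} z \<subseteq> nbrs E z"
  unfolding nbrs_def adj_def by auto

lemma suppress_graph:
  assumes "is_graph N E" "nbrs E x = {a, b}" "a \<noteq> b"
  shows "is_graph (N - {x}) ({e \<in> E. x \<notin> e} \<union> {{a, b}})"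
proof -
  have "adj E x a" "adj E x b" using assms(2) unfolding nbrs_def by auto
  then have "a \<in> N" "b \<in> N" "a \<noteq> x" "b \<noteq> x" using adj_in_nodes[OF assms(1)] by (auto simp: adj_def)
  then show ?thesis using assms(1,3) unfolding is_graph_def by fastforce
qed

lemma suppress_forest:
  assumes A: "forest E" and nb: "nbrs E x = {a, b}" "a \<noteq> b"
  shows "forest ({e \<in> E. x \<notin> e} \<union> {{a, b}})"
  unfolding forest_def
proof (intro allI impI notI)
  let ?E2 = "{e \<in> E. x \<notin> e} \<union> {{a, b}}"
  fix c d assume cd: "{c,d} \<in> ?E2" "c \<noteq> d" and r: "reach_in (?E2 - {{c,d}}) UNIV c d"
  have xa: "adj E x a" "adj E x b" using nb unfolding nbrs_def by auto
  then have xne: "x \<noteq> a" "x \<noteq> b" by (auto simp: adj_def)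
  show False
  proof (cases "{c,d} = {a,b}")
    case True
    have stp: "reach_in E (-{x}) (id s) (id t)" if "adj (?E2 - {{c,d}}) s t" "s \<in> UNIV" "t \<in> UNIV" for s t
      using that(1) True by (intro reach_in_edge) (auto simp: adj_def)
    have "reach_in E (-{x}) c d" using reach_in_map[OF r stp] by simp
    then have "reach_in E (-{x}) a b" using True reach_in_sym by (metis doubleton_eq_iff)
    then show False using forest_nbrs_separated[OF A xa nb(2)] by auto
  next
    case False
    then have cdE: "{c,d} \<in> E" "x \<notin> {c,d}" using cd by auto
    have stp: "reach_in (E - {{c,d}}) UNIV (id s) (id t)" if "adj (?E2 - {{c,d}}) s t" "s \<in> UNIV" "t \<in> UNIV" for s t
    proof (cases "{s,t} = {a,b}")
      case True
      have "adj (E - {{c,d}}) s x" "adj (E - {{c,d}}) x t"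
        using True xa cdE xne by (auto simp: adj_def doubleton_eq_iff insert_commute)
      then show ?thesis by (auto intro: reach_in_trans reach_in_edge)
    next
      case False
      then show ?thesis using that by (intro reach_in_edge) (auto simp: adj_def)
    qed
    have "reach_in (E - {{c,d}}) UNIV c d" using reach_in_map[OF r stp] by simp
    then show False using A cdE cd unfolding forest_def by blast
  qed
qed

lemma suppress_reach_in_imp:
  assumes nb: "nbrs E x = {a, b}" "x \<notin> Y" and r: "reach_in ({e \<in> E. x \<notin> e} \<union> {{a, b}}) (-Y) p q"
  shows "reach_in E (-Y) p q"
proof -
  have xa: "adj E x a" "adj E x b" using nb(1) unfolding nbrs_def by auto
  have "reach_in E (-Y) (id s) (id t)"
    if "adj ({e \<in> E. x \<notin> e} \<union> {{a, b}}) s t" "s \<in> -Y" "t \<in> -Y" for s t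
  proof (cases "{s,t} = {a,b}")
    case True
    have "adj E s x" "adj E x t" using True xa adj_sym by (auto simp: doubleton_eq_iff)
    then show ?thesis using that nb(2) by (auto intro: reach_in_trans reach_in_edge)
  next
    case False
    then show ?thesis using that by (intro reach_in_edge) (auto simp: adj_def)
  qed
  from reach_in_map[OF r this] show ?thesis by simp
qed

lemma reach_in_imp_suppress:
  assumes nb: "nbrs E x = {a, b}" "a \<noteq> b" and pq: "p \<noteq> x" "q \<noteq> x" and r: "reach_in E (-Y) p q"
  shows "reach_in ({e \<in> E. x \<notin> e} \<union> {{a, b}}) (-Y) p q"
proof -
  let ?E2 = "{e \<in> E. x \<notin> e} \<union> {{a, b}}"
  define x' where "x' = (if a \<notin> Y then a else b)"
  define g where "g s = (if s = x then x' else s)" for s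
  have via_x: "reach_in ?E2 (-Y) x' t" if "adj E x t" "t \<in> -Y" for t
  proof -
    have "t = a \<or> t = b" using nb(1) that(1) unfolding nbrs_def by auto
    then show ?thesis
      using that(2) nb(2) unfolding x'_def by (auto intro: reach_in_edge simp: adj_def)
  qed
  have step: "reach_in ?E2 (-Y) (g s) (g t)" if st: "adj E s t" "s \<in> -Y" "t \<in> -Y" for s t
  proof -
    consider "s = x" | "t = x" | "s \<noteq> x" "t \<noteq> x" by auto
    then show ?thesis
    proof cases
      case 1
      then have "t \<noteq> x" using st(1) by (auto simp: adj_def)
      then show ?thesis using 1 via_x[of t] st g_def by simp
    next
      case 2
      then have "s \<noteq> x" using st(1) by (auto simp: adj_def)
      then show ?thesis using 2 via_x[of s] st g_def adj_sym reach_in_sym by metis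
    next
      case 3 then show ?thesis using st g_def by (intro reach_in_edge) (auto simp: adj_def)
    qed
  qed
  have "reach_in ?E2 (-Y) (g p) (g q)" by (rule reach_in_map[OF r step])
  then show ?thesis using pq g_def by simp
qed

lemma suppress_reach_in:
  assumes nb: "nbrs E x = {a, b}" "a \<noteq> b" and Y: "Y \<subseteq> N - {x}" "p \<in> N - {x}" "q \<in> N - {x}"
  shows "reach_in ({e \<in> E. x \<notin> e} \<union> {{a, b}}) (-Y) p q \<longleftrightarrow> reach_in E (-Y) p q"
  using suppress_reach_in_imp[OF nb(1)] reach_in_imp_suppress[OF nb] Y by blast

lemma suppress_card_nbrs:
  assumes "is_graph N E" "nbrs E x = {a, b}" "a \<noteq> b" "z \<noteq> x"
  shows "card (nbrs ({e \<in> E. x \<notin> e} \<union> {{a, b}}) z) \<le> card (nbrs E z)"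
proof -
  let ?E2 = "{e \<in> E. x \<notin> e} \<union> {{a, b}}"
  have xa: "adj E x a" "adj E x b" using assms(2) unfolding nbrs_def by auto
  have fin: "finite (nbrs E z)" using finite_nbrs[OF assms(1)] .
  show ?thesis
  proof (cases "z = a \<or> z = b")
    case False
    then have "nbrs ?E2 z \<subseteq> nbrs E z" unfolding nbrs_def adj_def by (auto simp: doubleton_eq_iff)
    then show ?thesis using fin card_mono by blast
  next
    case True
    then obtain o' where o': "{z, o'} = {a, b}" "z \<noteq> o'" using assms(3) by auto
    have xz: "x \<in> nbrs E z" using xa True adj_sym unfolding nbrs_def by auto
    have "nbrs ?E2 z \<subseteq> insert o' (nbrs E z - {x})"
      unfolding nbrs_def adj_def using o' by (auto simp: doubleton_eq_iff)
    then have "card (nbrs ?E2 z) \<le> card (insert o' (nbrs E z - {x}))"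
      using fin by (intro card_mono) auto
    also have "\<dots> \<le> Suc (card (nbrs E z - {x}))" using fin by (simp add: card_insert_if)
    also have "\<dots> = card (nbrs E z)" using xz fin
      by (metis card_Suc_Diff1)
    finally show ?thesis .
  qed
qed

definition reduction_inv :: "'a set \<Rightarrow> 'a set \<Rightarrow> 'a set set \<Rightarrow> 'a set \<Rightarrow> 'a set set \<Rightarrow> bool" where
  "reduction_inv Lab N0 E0 N E \<longleftrightarrow> is_graph N E \<and> forest E \<and> N \<subseteq> N0 \<and>
     (\<forall>Y p q. Y \<subseteq> N \<longrightarrow> p \<in> N \<longrightarrow> q \<in> N \<longrightarrow> (reach_in E (-Y) p q \<longleftrightarrow> reach_in E0 (-Y) p q)) \<and>
     (\<forall>l\<in>Lab. l \<in> N \<and> card (nbrs E l) \<le> 1)"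

lemma reduce_step_facts:
  assumes st: "reduce_step Lab (N, E) (N2, E2)" and G: "is_graph N E"
  shows "is_graph N2 E2 \<and> N2 \<subseteq> N \<and> (forest E \<longrightarrow> forest E2) \<and>
    (\<forall>Y p q. Y \<subseteq> N2 \<longrightarrow> p \<in> N2 \<longrightarrow> q \<in> N2 \<longrightarrow> (reach_in E2 (-Y) p q \<longleftrightarrow> reach_in E (-Y) p q)) \<and>
    (\<forall>z\<in>N. card (nbrs E z) \<noteq> 1 \<longrightarrow> card (nbrs E z) \<noteq> 2 \<longrightarrow> z \<in> N2 \<and> card (nbrs E2 z) \<le> card (nbrs E z)) \<and>
    (\<forall>l\<in>Lab. l \<in> N \<longrightarrow> card (nbrs E l) \<le> 1 \<longrightarrow> l \<in> N2 \<and> card (nbrs E2 l) \<le> 1)"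
  using st
proof (cases rule: reduce_step.cases)
  case (delete x)
  obtain a where a: "nbrs E x = {a}" using degree_1_nbrs delete by metis
  have cn: "card (nbrs E2 z) \<le> card (nbrs E z)" for z
    using delete delete_nbrs finite_nbrs[OF G] card_mono by metis
  have "\<forall>l\<in>Lab. l \<in> N \<longrightarrow> card (nbrs E l) \<le> 1 \<longrightarrow> l \<in> N2 \<and> card (nbrs E2 l) \<le> 1"
    using cn[of l] delete le_trans by (metis Diff_iff cn singletonD)
  then show ?thesis using delete delete_graph[OF G] forest_mono[of E E2] delete_reach_in[OF a] cn
    by (auto simp: degree_def)
next
  case (suppress x a b)
  have cx: "card (nbrs E x) = 2" using suppress by simp
  have cn: "z \<noteq> x \<Longrightarrow> card (nbrs E2 z) \<le> card (nbrs E z)" for z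
    using suppress_card_nbrs[OF G suppress(4,5)] suppress by simp
  have "\<forall>l\<in>Lab. l \<in> N \<longrightarrow> card (nbrs E l) \<le> 1 \<longrightarrow> l \<in> N2 \<and> card (nbrs E2 l) \<le> 1"
  proof (intro ballI impI)
    fix l assume "l \<in> Lab" "l \<in> N" "card (nbrs E l) \<le> 1"
    then have "l \<noteq> x" using cx by auto
    then show "l \<in> N2 \<and> card (nbrs E2 l) \<le> 1" using cn[of l] suppress \<open>l \<in> N\<close> \<open>card (nbrs E l) \<le> 1\<close> by auto
  qed
  moreover have "\<forall>z\<in>N. card (nbrs E z) \<noteq> 1 \<longrightarrow> card (nbrs E z) \<noteq> 2 \<longrightarrow> z \<in> N2 \<and> card (nbrs E2 z) \<le> card (nbrs E z)"
    using cx cn suppress(1) by fastforce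
  ultimately show ?thesis using suppress suppress_graph[OF G suppress(4,5)] suppress_forest[OF _ suppress(4,5)]
      suppress_reach_in[OF suppress(4,5)]
    by auto
qed

lemma separated_three_card_nbrs:
  assumes G: "is_graph N E"
    and r: "reach_in E UNIV l1 y" "reach_in E UNIV l2 y" "reach_in E UNIV l3 y"
    and ne: "l1 \<noteq> y" "l2 \<noteq> y" "l3 \<noteq> y"
    and s: "\<not> reach_in E (-{y}) l1 l2" "\<not> reach_in E (-{y}) l1 l3" "\<not> reach_in E (-{y}) l2 l3"
  shows "3 \<le> card (nbrs E y)"
proof -
  obtain n1 where n1: "adj E n1 y" "reach_in E (-{y}) l1 n1" using reach_in_last_neighbour[OF r(1) ne(1)] by auto
  obtain n2 where n2: "adj E n2 y" "reach_in E (-{y}) l2 n2" using reach_in_last_neighbour[OF r(2) ne(2)] by auto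
  obtain n3 where n3: "adj E n3 y" "reach_in E (-{y}) l3 n3" using reach_in_last_neighbour[OF r(3) ne(3)] by auto
  have d: "n1 \<noteq> n2" "n1 \<noteq> n3" "n2 \<noteq> n3"
    using n1 n2 n3 s by (metis reach_in_sym reach_in_trans)+
  have "{n1, n2, n3} \<subseteq> nbrs E y" using n1 n2 n3 adj_sym unfolding nbrs_def by auto
  then have "card {n1, n2, n3} \<le> card (nbrs E y)" using finite_nbrs[OF G] card_mono by blast
  then show ?thesis using d by simp
qed

definition separates_three :: "'a set set \<Rightarrow> 'a set \<Rightarrow> 'a \<Rightarrow> bool" where
  "separates_three E0 Lab y \<longleftrightarrow> (\<exists>l1 l2 l3. l1 \<in> Lab \<and> l2 \<in> Lab \<and> l3 \<in> Lab \<and> l1 \<noteq> y \<and> l2 \<noteq> y \<and> l3 \<noteq> y \<and>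
      \<not> reach_in E0 (-{y}) l1 l2 \<and> \<not> reach_in E0 (-{y}) l1 l3 \<and> \<not> reach_in E0 (-{y}) l2 l3)"

lemma reduction_inv_connected:
  assumes I: "reduction_inv Lab N0 E0 N E" and C0: "connected_graph N0 E0"
  shows "connected_graph N E"
  unfolding connected_graph_def
proof (intro ballI)
  fix p q assume pq: "p \<in> N" "q \<in> N"
  have "N \<subseteq> N0" and R: "\<forall>Y p q. Y \<subseteq> N \<longrightarrow> p \<in> N \<longrightarrow> q \<in> N \<longrightarrow> (reach_in E (-Y) p q \<longleftrightarrow> reach_in E0 (-Y) p q)"
    using I unfolding reduction_inv_def by auto
  then have "reach_in E0 (-{}) p q" using C0 pq unfolding connected_graph_def by (auto simp: subset_iff)
  then show "reach_in E UNIV p q" using R pq by auto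
qed

lemma reduction_inv_separator_degree:
  assumes I: "reduction_inv Lab N0 E0 N E" and C0: "connected_graph N0 E0"
    and y: "y \<in> N" "separates_three E0 Lab y"
  shows "3 \<le> card (nbrs E y)"
proof -
  obtain l1 l2 l3 where l: "l1 \<in> Lab" "l2 \<in> Lab" "l3 \<in> Lab" "l1 \<noteq> y" "l2 \<noteq> y" "l3 \<noteq> y"
    "\<not> reach_in E0 (-{y}) l1 l2" "\<not> reach_in E0 (-{y}) l1 l3" "\<not> reach_in E0 (-{y}) l2 l3"
    using y(2) unfolding separates_three_def by blast
  have G: "is_graph N E" and lN: "l1 \<in> N" "l2 \<in> N" "l3 \<in> N"
    and R: "\<forall>Y p q. Y \<subseteq> N \<longrightarrow> p \<in> N \<longrightarrow> q \<in> N \<longrightarrow> (reach_in E (-Y) p q \<longleftrightarrow> reach_in E0 (-Y) p q)"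
    using I l unfolding reduction_inv_def by auto
  have sep: "\<not> reach_in E (-{y}) l1 l2" "\<not> reach_in E (-{y}) l1 l3" "\<not> reach_in E (-{y}) l2 l3"
    using R y(1) lN l(7-9) by auto
  have C: "reach_in E UNIV a y" if "a \<in> N" for a
    using reduction_inv_connected[OF I C0] that y(1) unfolding connected_graph_def by blast
  show ?thesis using separated_three_card_nbrs[OF G C[OF lN(1)] C[OF lN(2)] C[OF lN(3)] l(4-6) sep] .
qed

lemma reduction_inv_step:
  assumes st: "reduce_step Lab (N, E) (N2, E2)" and I: "reduction_inv Lab N0 E0 N E"
  shows "reduction_inv Lab N0 E0 N2 E2"
proof -
  have G: "is_graph N E" and N0: "N \<subseteq> N0"
    and R: "\<forall>Y p q. Y \<subseteq> N \<longrightarrow> p \<in> N \<longrightarrow> q \<in> N \<longrightarrow> (reach_in E (-Y) p q \<longleftrightarrow> reach_in E0 (-Y) p q)"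
    using I unfolding reduction_inv_def by auto
  have N2: "N2 \<subseteq> N"
    and R2: "\<forall>Y p q. Y \<subseteq> N2 \<longrightarrow> p \<in> N2 \<longrightarrow> q \<in> N2 \<longrightarrow> (reach_in E2 (-Y) p q \<longleftrightarrow> reach_in E (-Y) p q)"
    using reduce_step_facts[OF st G] by auto
  have "\<forall>Y p q. Y \<subseteq> N2 \<longrightarrow> p \<in> N2 \<longrightarrow> q \<in> N2 \<longrightarrow> (reach_in E2 (-Y) p q \<longleftrightarrow> reach_in E0 (-Y) p q)"
  proof (intro allI impI)
    fix Y p q assume "Y \<subseteq> N2" "p \<in> N2" "q \<in> N2"
    then show "reach_in E2 (-Y) p q \<longleftrightarrow> reach_in E0 (-Y) p q"
      using R2 R N2 by (meson subset_trans subsetD)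
  qed
  then show ?thesis
    using reduce_step_facts[OF st G] I N2 N0 unfolding reduction_inv_def by auto
qed

lemma reduce_steps_inv:
  assumes st: "(reduce_step Lab)\<^sup>*\<^sup>* (N0, E0) (N', E')"
    and G0: "is_graph N0 E0" "forest E0" "connected_graph N0 E0" "\<forall>l\<in>Lab. l \<in> N0 \<and> card (nbrs E0 l) \<le> 1"
    and sep: "Sep \<subseteq> N0" "\<forall>y\<in>Sep. separates_three E0 Lab y"
  shows "reduction_inv Lab N0 E0 N' E' \<and> Sep \<subseteq> N'"
  using st
proof (induction rule: rtranclp_induct2)
  case refl
  then show ?case using G0 sep(1) unfolding reduction_inv_def by auto
next
  case (step N E N2 E2)
  have "Sep \<subseteq> N2"
  proof
    fix y assume "y \<in> Sep"
    then have "y \<in> N" "3 \<le> card (nbrs E y)"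
      using step.IH reduction_inv_separator_degree[OF _ G0(3)] sep(2) by auto
    moreover have "is_graph N E" using step.IH unfolding reduction_inv_def by auto
    ultimately show "y \<in> N2" using reduce_step_facts[OF step.hyps(2)] by auto
  qed
  then show ?case using reduction_inv_step[OF step.hyps(2)] step.IH by blast
qed

section \<open>Three copies of a tree joined at a centre\<close>

locale tree_edge =
  fixes N :: "'n set" and E :: "'n set set" and u v :: 'n
  assumes graph_NE: "is_graph N E" and forest_E: "forest E" and connected_NE: "connected_graph N E"
    and uv_edge: "{u, v} \<in> E" and u_neq_v: "u \<noteq> v"
begin

abbreviation "N0 \<equiv> init_nodes N"
abbreviation "E0 \<equiv> init_edges E u v"

lemma uv_in_nodes: "u \<in> N" "v \<in> N" using adj_in_nodes[OF graph_NE, of u v] uv_edge u_neq_v by (auto simp: adj_def)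

lemma mem_init_edges:
  "e \<in> E0 \<longleftrightarrow>
    (\<exists>i\<in>{1,2,3}. \<exists>x y. e = {Cp i x, Cp i y} \<and> {x,y} \<in> E \<and> {x,y} \<noteq> {u,v}) \<or>
    (\<exists>i\<in>{1,2,3}. e \<in> {{Cp i u, Sub i}, {Sub i, Cp i v}, {Sub i, Ctr}})"
  unfolding init_edges_def Un_iff mem_Collect_eq insert_iff empty_iff by blast

lemma adj_init:
  "adj E0 s t \<longleftrightarrow>
    (\<exists>i\<in>{1,2,3}. \<exists>x y. s = Cp i x \<and> t = Cp i y \<and> adj E x y \<and> {x,y} \<noteq> {u,v}) \<or>
    (\<exists>i\<in>{1,2,3}. (s = Cp i u \<and> t = Sub i) \<or> (s = Sub i \<and> t = Cp i u) \<or>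
        (s = Cp i v \<and> t = Sub i) \<or> (s = Sub i \<and> t = Cp i v) \<or>
        (s = Sub i \<and> t = Ctr) \<or> (s = Ctr \<and> t = Sub i))"
  (is "?L \<longleftrightarrow> ?A \<or> ?B")
proof
  assume L: ?L
  then have st: "{s,t} \<in> E0" "s \<noteq> t" by (auto simp: adj_def)
  from st(1)[unfolded mem_init_edges] show "?A \<or> ?B"
  proof (elim disjE bexE exE conjE)
    fix i x y assume h: "i \<in> {1,2,3}" "{s, t} = {Cp i x, Cp i y}" "{x, y} \<in> E" "{x, y} \<noteq> {u, v}"
    have "x \<noteq> y"
    proof
      assume "x = y"
      then have "{s,t} = {Cp i x}" using h(2) by simp
      then show False using st(2) by (metis insertCI singletonD)
    qed
    then have a: "adj E x y" "adj E y x" "{y,x} \<noteq> {u,v}" using h(3,4) by (auto simp: adj_def insert_commute)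
    from h(2) have "(s = Cp i x \<and> t = Cp i y) \<or> (s = Cp i y \<and> t = Cp i x)" by (simp add: doubleton_eq_iff)
    then have ?A using a h(1,4) by blast
    then show ?thesis by (rule disjI1)
  next
    fix i assume i: "i \<in> {1,2,3}" and h0: "{s, t} \<in> {{Cp i u, Sub i}, {Sub i, Cp i v}, {Sub i, Ctr}}"
    then have h: "{s, t} = {Cp i u, Sub i} \<or> {s, t} = {Sub i, Cp i v} \<or> {s, t} = {Sub i, Ctr}" by simp
    have "(s = Cp i u \<and> t = Sub i) \<or> (s = Sub i \<and> t = Cp i u) \<or>
        (s = Cp i v \<and> t = Sub i) \<or> (s = Sub i \<and> t = Cp i v) \<or>
        (s = Sub i \<and> t = Ctr) \<or> (s = Ctr \<and> t = Sub i)"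
      using h unfolding doubleton_eq_iff by blast
    then have ?B by (intro bexI[OF _ i])
    then show ?thesis by (rule disjI2)
  qed
next
  assume "?A \<or> ?B"
  then show ?L
  proof
    assume ?A
    then obtain i x y where h: "i \<in> {1,2,3}" "s = Cp i x" "t = Cp i y" "adj E x y" "{x,y} \<noteq> {u,v}" by blast
    have "\<exists>x' y'. {s,t} = {Cp i x', Cp i y'} \<and> {x',y'} \<in> E \<and> {x',y'} \<noteq> {u,v}"
      using h(2-5) by (auto simp: adj_def)
    then have "{s,t} \<in> E0" unfolding mem_init_edges using h(1) by blast
    moreover have "s \<noteq> t" using h(2-4) by (auto simp: adj_def)
    ultimately show ?L by (simp add: adj_def)
  next
    assume ?B
    then obtain i where i: "i \<in> {1,2,3}" and h: "(s = Cp i u \<and> t = Sub i) \<or> (s = Sub i \<and> t = Cp i u) \<or>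
        (s = Cp i v \<and> t = Sub i) \<or> (s = Sub i \<and> t = Cp i v) \<or>
        (s = Sub i \<and> t = Ctr) \<or> (s = Ctr \<and> t = Sub i)" by blast
    have "{s,t} = {Cp i u, Sub i} \<or> {s,t} = {Sub i, Cp i v} \<or> {s,t} = {Sub i, Ctr}"
      using h by (auto simp: insert_commute)
    then have "{s,t} \<in> {{Cp i u, Sub i}, {Sub i, Cp i v}, {Sub i, Ctr}}" by simp
    then have "{s,t} \<in> E0" unfolding mem_init_edges using i by blast
    moreover have "s \<noteq> t" using h by auto
    ultimately show ?L by (simp add: adj_def)
  qed
qed

lemma adj_init_cases[consumes 1, case_names cp cu uc cv vc sc cs]:
  assumes "adj E0 s t"
  obtains (cp) i x y where "i \<in> {1,2,3}" "s = Cp i x" "t = Cp i y" "adj E x y" "{x,y} \<noteq> {u,v}"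
    | (cu) i where "i \<in> {1,2,3}" "s = Cp i u" "t = Sub i"
    | (uc) i where "i \<in> {1,2,3}" "s = Sub i" "t = Cp i u"
    | (cv) i where "i \<in> {1,2,3}" "s = Cp i v" "t = Sub i"
    | (vc) i where "i \<in> {1,2,3}" "s = Sub i" "t = Cp i v"
    | (sc) i where "i \<in> {1,2,3}" "s = Sub i" "t = Ctr"
    | (cs) i where "i \<in> {1,2,3}" "s = Ctr" "t = Sub i"
  using assms unfolding adj_init
  by (elim disjE bexE exE conjE) ((rule cp; assumption) | (rule cu; assumption) | (rule uc; assumption) |
      (rule cv; assumption) | (rule vc; assumption) | (rule sc; assumption) | (rule cs; assumption))+

lemma init_nodes_eq: "N0 = (Cp 1 ` N) \<union> (Cp 2 ` N) \<union> (Cp 3 ` N) \<union> {Sub 1, Sub 2, Sub 3, Ctr}"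
  unfolding init_nodes_def by auto

lemma in_init_nodes: "i \<in> {1,2,3} \<Longrightarrow> x \<in> N \<Longrightarrow> Cp i x \<in> N0" "i \<in> {1,2,3} \<Longrightarrow> Sub i \<in> N0" "Ctr \<in> N0"
  unfolding init_nodes_def by blast+

lemma init_graph: "is_graph N0 E0"
proof -
  have "finite N" using graph_NE unfolding is_graph_def by auto
  then have "finite N0" unfolding init_nodes_eq by auto
  moreover have "\<forall>e\<in>E0. \<exists>x y. e = {x, y} \<and> x \<noteq> y \<and> x \<in> N0 \<and> y \<in> N0"
  proof
    fix e assume "e \<in> E0"
    then show "\<exists>x y. e = {x, y} \<and> x \<noteq> y \<and> x \<in> N0 \<and> y \<in> N0"
      unfolding mem_init_edges
    proof (elim disjE bexE exE conjE)
      fix i x y assume h: "i \<in> {1,2,3}" "e = {Cp i x, Cp i y}" "{x, y} \<in> E" "{x, y} \<noteq> {u, v}"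
      have "adj E x y" using h(3) graph_NE unfolding is_graph_def adj_def
        by (metis doubleton_eq_iff)
      then have "x \<in> N" "y \<in> N" "x \<noteq> y" using adj_in_nodes[OF graph_NE] by (auto simp: adj_def)
      then show ?thesis using h(1,2) in_init_nodes by blast
    next
      fix i assume i: "i \<in> {1,2,3}" and h: "e \<in> {{Cp i u, Sub i}, {Sub i, Cp i v}, {Sub i, Ctr}}"
      have "Cp i u \<in> N0" "Cp i v \<in> N0" "Sub i \<in> N0" "Ctr \<in> N0" using in_init_nodes i uv_in_nodes by auto
      then show ?thesis using h by blast
    qed
  qed
  ultimately show ?thesis unfolding is_graph_def by auto
qed

lemma reach_in_copy:
  assumes "reach_in E (-Y) x z" "u \<notin> Y" "v \<notin> Y" "i \<in> {1,2,3}"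
  shows "reach_in E0 (Cp i ` (-Y) \<union> {Sub i}) (Cp i x) (Cp i z)"
proof -
  have stp: "reach_in E0 (Cp i ` (-Y) \<union> {Sub i}) (Cp i s) (Cp i t)" if "adj E s t" "s \<in> -Y" "t \<in> -Y" for s t
  proof (cases "{s,t} = {u,v}")
    case True
    then have "adj E0 (Cp i s) (Sub i) \<and> adj E0 (Sub i) (Cp i t)"
      using assms(4) by (auto simp: adj_init doubleton_eq_iff)
    then show ?thesis using that by (meson Un_iff image_eqI insertI1 reach_in_edge reach_in_trans)
  next
    case False
    then have "adj E0 (Cp i s) (Cp i t)" using that assms(4) by (auto simp: adj_init)
    then show ?thesis using that by (intro reach_in_edge) auto
  qed
  show ?thesis by (rule reach_in_map[OF assms(1) stp])
qed

lemma reach_in_Ctr: "s \<in> N0 \<Longrightarrow> reach_in E0 UNIV s Ctr"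
proof -
  assume s: "s \<in> N0"
  have sub: "reach_in E0 UNIV (Sub i) Ctr" if "i \<in> {1,2,3}" for i
    using that by (intro reach_in_edge) (auto simp: adj_init)
  show ?thesis
  proof (cases s)
    case (Cp i x)
    then have ix: "i \<in> {1,2,3}" "x \<in> N" using s unfolding init_nodes_def by auto
    have "reach_in E (-{}) x u" using connected_NE ix uv_in_nodes unfolding connected_graph_def by auto
    from reach_in_copy[OF this _ _ ix(1)] have "reach_in E0 UNIV (Cp i x) (Cp i u)" by (auto elim: reach_in_mono)
    moreover have "reach_in E0 UNIV (Cp i u) (Sub i)" using ix by (intro reach_in_edge) (auto simp: adj_init)
    ultimately show ?thesis using Cp sub[OF ix(1)] by (meson reach_in_trans)
  next
    case (Sub i)
    then show ?thesis using s sub unfolding init_nodes_def by auto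
  qed simp
qed

lemma init_connected: "connected_graph N0 E0"
  unfolding connected_graph_def using reach_in_Ctr by (meson reach_in_sym reach_in_trans)

text \<open>Every edge of the initial graph is a bridge: projecting copy i onto T and all other nodes
  onto an end of uv turns a detour around the edge into a detour in T.\<close>
lemma init_copy_edge_bridge:
  assumes edge: "adj E x y" "{x,y} \<noteq> {u,v}" "i \<in> {1,2,3}"
  shows "\<not> reach_in (E0 - {{Cp i x, Cp i y}}) UNIV (Cp i x) (Cp i y)"
proof
  let ?R = "E0 - {{Cp i x, Cp i y}}"
  assume r: "reach_in ?R UNIV (Cp i x) (Cp i y)"
  define g where "g z = (case z of Cp j a \<Rightarrow> (if j = i then a else u) | _ \<Rightarrow> u)" for z
  have e: "adj (E - {{x,y}}) u v" "adj (E - {{x,y}}) v u" using uv_edge u_neq_v edge(2)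
    by (auto simp: adj_def doubleton_eq_iff insert_commute)
  have stp: "reach_in (E - {{x,y}}) UNIV (g a) (g b)" if "adj ?R a b" "a \<in> UNIV" "b \<in> UNIV" for a b
  proof -
    have ab: "adj E0 a b" "{a,b} \<noteq> {Cp i x, Cp i y}" using that(1) unfolding adj_remove_edge by auto
    show ?thesis using ab(1)
    proof (cases rule: adj_init_cases)
      case (cp j a' b')
      show ?thesis
      proof (cases "j = i")
        case True
        then have "{a',b'} \<noteq> {x,y}" using ab(2) cp by (auto simp: doubleton_eq_iff)
        then show ?thesis using cp True g_def by (intro reach_in_edge) (auto simp: adj_def)
      next
        case False then show ?thesis using cp g_def by simp
      qed
    qed (auto simp: g_def intro: reach_in_edge e)
  qed
  have "reach_in (E - {{x,y}}) UNIV (g (Cp i x)) (g (Cp i y))" by (rule reach_in_map[OF r stp])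
  then show False using edge g_def forestD[OF forest_E, of x y] by (simp add: adj_def)
qed

lemma init_u_edge_bridge:
  assumes "i \<in> {1,2,3}"
  shows "\<not> reach_in (E0 - {{Cp i u, Sub i}}) UNIV (Cp i u) (Sub i)"
proof
  let ?R = "E0 - {{Cp i u, Sub i}}"
  assume r: "reach_in ?R UNIV (Cp i u) (Sub i)"
  define g where "g z = (case z of Cp j a \<Rightarrow> (if j = i then a else v) | _ \<Rightarrow> v)" for z
  have stp: "reach_in (E - {{u,v}}) UNIV (g a) (g b)" if "adj ?R a b" "a \<in> UNIV" "b \<in> UNIV" for a b
  proof -
    have ab: "adj E0 a b" "{a,b} \<noteq> {Cp i u, Sub i}" using that(1) unfolding adj_remove_edge by auto
    show ?thesis using ab(1)
    proof (cases rule: adj_init_cases)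
      case (cp j a' b')
      then show ?thesis using g_def by (cases "j = i") (auto intro!: reach_in_edge simp: adj_def)
    qed (use ab(2) in \<open>auto simp: g_def insert_commute\<close>)
  qed
  have "reach_in (E - {{u,v}}) UNIV (g (Cp i u)) (g (Sub i))" by (rule reach_in_map[OF r stp])
  then show False using g_def forestD[OF forest_E uv_edge u_neq_v] by simp
qed

lemma init_v_edge_bridge:
  assumes "i \<in> {1,2,3}"
  shows "\<not> reach_in (E0 - {{Sub i, Cp i v}}) UNIV (Sub i) (Cp i v)"
proof
  let ?R = "E0 - {{Sub i, Cp i v}}"
  assume r: "reach_in ?R UNIV (Sub i) (Cp i v)"
  define g where "g z = (case z of Cp j a \<Rightarrow> (if j = i then a else u) | _ \<Rightarrow> u)" for z
  have stp: "reach_in (E - {{u,v}}) UNIV (g a) (g b)" if "adj ?R a b" "a \<in> UNIV" "b \<in> UNIV" for a b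
  proof -
    have ab: "adj E0 a b" "{a,b} \<noteq> {Sub i, Cp i v}" using that(1) unfolding adj_remove_edge by auto
    show ?thesis using ab(1)
    proof (cases rule: adj_init_cases)
      case (cp j a' b')
      then show ?thesis using g_def by (cases "j = i") (auto intro!: reach_in_edge simp: adj_def)
    qed (use ab(2) in \<open>auto simp: g_def insert_commute\<close>)
  qed
  have "reach_in (E - {{u,v}}) UNIV (g (Sub i)) (g (Cp i v))" by (rule reach_in_map[OF r stp])
  then show False using g_def forestD[OF forest_E uv_edge u_neq_v] by simp
qed

lemma init_centre_edge_bridge:
  assumes "i \<in> {1,2,3}"
  shows "\<not> reach_in (E0 - {{Sub i, Ctr}}) UNIV (Sub i) Ctr"
proof
  let ?R = "E0 - {{Sub i, Ctr}}"
  assume r: "reach_in ?R UNIV (Sub i) Ctr"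
  define g where "g z = (case z of Cp j a \<Rightarrow> j = i | Sub j \<Rightarrow> j = i | Ctr \<Rightarrow> False)" for z :: "'n rnode"
  have stp: "reach_in ({} :: bool set set) UNIV (g a) (g b)" if "adj ?R a b" "a \<in> UNIV" "b \<in> UNIV" for a b
  proof -
    have ab: "adj E0 a b" "{a,b} \<noteq> {Sub i, Ctr}" using that(1) unfolding adj_remove_edge by auto
    show ?thesis using ab(1)
    proof (cases rule: adj_init_cases)
      case (sc j)
      then have "j \<noteq> i" using ab(2) by auto
      then show ?thesis using sc g_def by simp
    next
      case (cs j)
      then have "j \<noteq> i" using ab(2) by (auto simp: insert_commute)
      then show ?thesis using cs g_def by simp
    qed (auto simp: g_def)
  qed
  have "reach_in ({} :: bool set set) UNIV (g (Sub i)) (g Ctr)" by (rule reach_in_map[OF r stp])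
  moreover have "g (Sub i) \<noteq> g Ctr" using g_def by simp
  ultimately show False using reach_in_empty[of UNIV "g (Sub i)" "g Ctr"] by blast
qed

lemma init_forest: "forest E0"
  unfolding forest_def
proof (intro allI impI notI)
  fix s t assume st: "{s,t} \<in> E0" "s \<noteq> t" and r: "reach_in (E0 - {{s,t}}) UNIV s t"
  have r': "reach_in (E0 - {{t,s}}) UNIV t s" using reach_in_sym[OF r] by (simp add: insert_commute)
  have st': "adj E0 s t" using st by (simp add: adj_def)
  then show False
  proof (cases rule: adj_init_cases)
    case (cp i x y)
    then show False using init_copy_edge_bridge r by blast
  next
    case (cu i) then show False using init_u_edge_bridge r by blast
  next
    case (uc i) then show False using init_u_edge_bridge r' by blast
  next
    case (vc i) then show False using init_v_edge_bridge r by blast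
  next
    case (cv i) then show False using init_v_edge_bridge r' by blast
  next
    case (sc i) then show False using init_centre_edge_bridge r by blast
  next
    case (cs i) then show False using init_centre_edge_bridge r' by blast
  qed
qed

lemma r_subtree_eq_u: "w \<in> N \<Longrightarrow> w \<noteq> u \<Longrightarrow>
  r_subtree N E {u,v} w = {x\<in>N. x = w \<or> \<not> reach_in E (-{w}) x u}"
  using r_subtree_eq[OF graph_NE forest_E connected_NE uv_edge u_neq_v] by blast

lemma r_subtree_eq_v: "w \<in> N \<Longrightarrow> w \<noteq> v \<Longrightarrow>
  r_subtree N E {u,v} w = {x\<in>N. x = w \<or> \<not> reach_in E (-{w}) x v}"
  using r_subtree_eq[OF graph_NE forest_E connected_NE _ u_neq_v[symmetric]] uv_edge by (simp add: insert_commute)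

lemma leaf_copy_card_nbrs:
  assumes "nbrs E z = {a}" "i \<in> {1,2,3}"
  shows "card (nbrs E0 (Cp i z)) \<le> 1"
proof -
  have za: "adj E z a" using assms(1) unfolding nbrs_def by auto
  have "nbrs E0 (Cp i z) \<subseteq> (if z \<in> {u,v} then {Sub i} else {Cp i a})"
  proof
    fix t assume "t \<in> nbrs E0 (Cp i z)"
    then have "adj E0 (Cp i z) t" unfolding nbrs_def by simp
    then show "t \<in> (if z \<in> {u,v} then {Sub i} else {Cp i a})"
    proof (cases rule: adj_init_cases)
      case (cp j x y)
      then have xy: "x = z" "j = i" "adj E z y" by auto
      then have ya: "y = a" using assms(1) unfolding nbrs_def by auto
      have "z \<notin> {u,v}"
      proof
        assume "z \<in> {u,v}"
        have "adj E z (if z = u then v else u)" using \<open>z \<in> {u,v}\<close> uv_edge u_neq_v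
          by (auto simp: adj_def insert_commute)
        then have "(if z = u then v else u) \<in> nbrs E z" unfolding nbrs_def by simp
        then have "a = (if z = u then v else u)" using assms(1) by simp
        then have "{z,a} = {u,v}" using \<open>z \<in> {u,v}\<close> by (auto simp: insert_commute)
        then show False using cp xy ya by simp
      qed
      then show ?thesis using cp xy ya by simp
    qed auto
  qed
  moreover have fin: "finite (if z \<in> {u,v} then {Sub i} else {Cp i a})" by simp
  ultimately have "card (nbrs E0 (Cp i z)) \<le> card (if z \<in> {u,v} then {Sub i} else {Cp i a})"
    using card_mono by blast
  then show ?thesis by (simp split: if_splits)
qed

lemma copy_closed:
  assumes "u \<notin> S" "v \<notin> S" "\<forall>x\<in>S. \<forall>z. adj E x z \<longrightarrow> z \<noteq> w \<longrightarrow> z \<in> S"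
    and "reach_in E0 (-{Cp i w}) s t" "s \<in> Cp i ` S"
  shows "t \<in> Cp i ` S"
  using assms(4,5)
proof (rule reach_in_closed)
  fix s' t' assume h: "adj E0 s' t'" "s' \<in> -{Cp i w}" "t' \<in> -{Cp i w}" "s' \<in> Cp i ` S"
  from h(1) show "t' \<in> Cp i ` S"
  proof (cases rule: adj_init_cases)
    case (cp j x y)
    then have "j = i" "x \<in> S" using h(4) by auto
    then show ?thesis using cp h(3) assms(3) by auto
  qed (use h(4) assms(1,2) in auto)
qed

lemma reach_in_Ctr_avoiding:
  assumes w: "w \<in> N" "w \<notin> {u,v}" and i: "i \<in> {1,2,3}"
    and s: "s \<in> N0" "s \<noteq> Cp i w" "s \<notin> Cp i ` r_subtree N E {u,v} w"
  shows "reach_in E0 (-{Cp i w}) s Ctr"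
proof -
  have sub: "reach_in E0 (-{Cp i w}) (Sub j) Ctr" if "j \<in> {1,2,3}" for j
    using that by (intro reach_in_edge) (auto simp: adj_init)
  have cu: "reach_in E0 (-{Cp i w}) (Cp j u) Ctr" if "j \<in> {1,2,3}" for j
  proof -
    have "reach_in E0 (-{Cp i w}) (Cp j u) (Sub j)" using that w by (intro reach_in_edge) (auto simp: adj_init)
    then show ?thesis using sub[OF that] by (rule reach_in_trans)
  qed
  show ?thesis
  proof (cases s)
    case (Cp j x)
    then have jx: "j \<in> {1,2,3}" "x \<in> N" using s unfolding init_nodes_def by auto
    show ?thesis
    proof (cases "j = i")
      case True
      then have "x \<noteq> w" "x \<notin> r_subtree N E {u,v} w" using s Cp by auto
      then have "reach_in E (-{w}) x u" using r_subtree_eq_u[OF w(1)] w jx by auto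
      from reach_in_copy[OF this _ _ i] w have "reach_in E0 (Cp i ` (-{w}) \<union> {Sub i}) (Cp i x) (Cp i u)" by auto
      then have "reach_in E0 (-{Cp i w}) (Cp i x) (Cp i u)" by (rule reach_in_mono) auto
      then show ?thesis using cu[OF i] Cp True by (meson reach_in_trans)
    next
      case False
      have "reach_in E (-{}) x u" using connected_NE jx uv_in_nodes unfolding connected_graph_def by auto
      from reach_in_copy[OF this _ _ jx(1)] have r1: "reach_in E0 (Cp j ` (-{}) \<union> {Sub j}) (Cp j x) (Cp j u)" by auto
      have ss: "Cp j ` (-{}) \<union> {Sub j} \<subseteq> -{Cp i w}" using False by blast
      have "reach_in E0 (-{Cp i w}) (Cp j x) (Cp j u)" using reach_in_mono[OF r1 order_refl ss] .
      then show ?thesis using cu[OF jx(1)] Cp by (meson reach_in_trans)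
    qed
  next
    case (Sub j)
    then show ?thesis using s sub unfolding init_nodes_def by auto
  qed simp
qed

lemma reach_in_avoiding_copy_iff:
  assumes w: "w \<in> N" "w \<notin> {u,v}" and i: "i \<in> {1,2,3}"
    and s: "s \<in> N0" "s \<noteq> Cp i w" and c: "c \<in> N0" "c \<notin> Cp i ` r_subtree N E {u,v} w"
  shows "reach_in E0 (-{Cp i w}) s c \<longleftrightarrow> s \<notin> Cp i ` r_subtree N E {u,v} w"
proof
  let ?S = "r_subtree N E {u,v} w - {w}"
  have Sc: "?S = {x\<in>N. x \<noteq> w \<and> \<not> reach_in E (-{w}) x u}" using r_subtree_eq_u[OF w(1)] w by auto
  have uS: "u \<notin> ?S" using Sc by auto
  have "adj E v u" using uv_edge u_neq_v by (auto simp: adj_def insert_commute)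
  then have "reach_in E (-{w}) v u" using w by (intro reach_in_edge) auto
  then have vS: "v \<notin> ?S" using Sc by auto
  have cl: "\<forall>x\<in>?S. \<forall>z. adj E x z \<longrightarrow> z \<noteq> w \<longrightarrow> z \<in> ?S"
  proof (intro ballI allI impI)
    fix x z assume x: "x \<in> ?S" and z: "adj E x z" "z \<noteq> w"
    have "z \<in> N" using adj_in_nodes[OF graph_NE z(1)] by auto
    moreover have "\<not> reach_in E (-{w}) z u"
    proof
      assume "reach_in E (-{w}) z u"
      moreover have "reach_in E (-{w}) x z" using x z Sc by (intro reach_in_edge) auto
      ultimately have "reach_in E (-{w}) x u" by (rule reach_in_trans[rotated])
      then show False using x Sc by blast
    qed
    ultimately show "z \<in> ?S" using Sc z by auto
  qed
  assume r: "reach_in E0 (-{Cp i w}) s c"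
  show "s \<notin> Cp i ` r_subtree N E {u,v} w"
  proof
    assume "s \<in> Cp i ` r_subtree N E {u,v} w"
    then have "s \<in> Cp i ` ?S" using s by auto
    from copy_closed[OF uS vS cl r this] show False using c by auto
  qed
next
  assume "s \<notin> Cp i ` r_subtree N E {u,v} w"
  then have "reach_in E0 (-{Cp i w}) s Ctr" using reach_in_Ctr_avoiding w i s by auto
  moreover have "reach_in E0 (-{Cp i w}) c Ctr"
  proof (rule reach_in_Ctr_avoiding[OF w i c(1) _ c(2)])
    show "c \<noteq> Cp i w"
    proof
      assume "c = Cp i w"
      moreover have "w \<in> r_subtree N E {u,v} w" using r_subtree_eq_u[OF w(1)] w by auto
      ultimately show False using c by auto
    qed
  qed
  ultimately show "reach_in E0 (-{Cp i w}) s c" by (meson reach_in_sym reach_in_trans)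
qed

lemma side_copy_closed:
  assumes w: "w \<notin> {u,v}" and a: "adj E w a" "u \<notin> side E w a"
    and r: "reach_in E0 (-{Cp i w}) s t" "s \<in> Cp i ` side E w a"
  shows "t \<in> Cp i ` side E w a"
proof (rule copy_closed[OF a(2) _ _ r])
  have aw: "a \<noteq> w" using a(1) by (auto simp: adj_def)
  show "v \<notin> side E w a"
  proof
    assume "v \<in> side E w a"
    moreover have "adj E v u" using uv_edge u_neq_v by (auto simp: adj_def insert_commute)
    ultimately have "u \<in> side E w a" using side_closed[of v E w a u] aw w by auto
    then show False using a(2) by simp
  qed
  show "\<forall>x\<in>side E w a. \<forall>z. adj E x z \<longrightarrow> z \<noteq> w \<longrightarrow> z \<in> side E w a"
    by (auto intro: side_closed[where E=E, OF _ aw])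
qed

lemma side_leaf_in_r_subtree:
  assumes w: "w \<in> N" "w \<notin> {u,v}" and a: "adj E w a" "u \<notin> side E w a"
  obtains z where "z \<in> side E w a" "z \<in> N" "card (nbrs E z) \<le> 1" "z \<in> r_subtree N E {u,v} w"
proof -
  have aN: "a \<in> N" using adj_in_nodes[OF graph_NE a(1)] by auto
  obtain z where z: "reach_in E (-{w}) a z" "card (nbrs E z) \<le> 1"
    using forest_leaf_behind[OF graph_NE forest_E a(1)] by auto
  have zN: "z \<in> N" using reach_in_nodes[OF graph_NE z(1) aN] .
  have "\<not> reach_in E (-{w}) z u"
  proof
    assume "reach_in E (-{w}) z u"
    then have "u \<in> side E w a" using reach_in_trans[OF z(1)] unfolding side_def by simp
    then show False using a(2) by simp
  qed
  then have "z \<in> r_subtree N E {u,v} w" using r_subtree_eq_u[OF w(1)] w zN by auto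
  then show thesis using that[of z] z zN unfolding side_def by simp
qed

text \<open>Two of the three sides of w avoid the root edge; each contains a leaf of the subtree of w,
  and no walk avoiding the copy of w leaves the copy of a side.\<close>
lemma inner_copy_separates_three:
  assumes w: "w \<in> N" "w \<notin> {u,v}" "card (nbrs E w) = 3" and i: "i \<in> {1,2,3}"
    and lab: "\<forall>z\<in>N. card (nbrs E z) \<le> 1 \<longrightarrow> z \<in> r_subtree N E {u,v} w \<longrightarrow> Cp i z \<in> Lab"
    and l3: "l3 \<in> Lab" "l3 \<notin> range (Cp i)"
  shows "separates_three E0 Lab (Cp i w)"
proof -
  obtain a b where ab: "adj E w a" "adj E w b" "a \<noteq> b" "u \<notin> side E w a" "u \<notin> side E w b"
    by (rule forest_two_sides_avoiding[OF forest_E w(3)])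
  have aw: "a \<noteq> w" "b \<noteq> w" using ab(1,2) by (auto simp: adj_def)
  obtain z1 where z1: "z1 \<in> side E w a" "z1 \<in> N" "card (nbrs E z1) \<le> 1" "z1 \<in> r_subtree N E {u,v} w"
    by (rule side_leaf_in_r_subtree[OF w(1,2) ab(1,4)])
  obtain z2 where z2: "z2 \<in> side E w b" "z2 \<in> N" "card (nbrs E z2) \<le> 1" "z2 \<in> r_subtree N E {u,v} w"
    by (rule side_leaf_in_r_subtree[OF w(1,2) ab(2,5)])
  have n12: "\<not> reach_in E0 (-{Cp i w}) (Cp i z1) (Cp i z2)"
  proof
    assume "reach_in E0 (-{Cp i w}) (Cp i z1) (Cp i z2)"
    then have "Cp i z2 \<in> Cp i ` side E w a" using side_copy_closed[OF w(2) ab(1,4)] z1(1) by simp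
    then show False using forest_sides_disjoint[OF forest_E ab(1-3)] z2(1) by auto
  qed
  have "l3 \<notin> Cp i ` side E w a" "l3 \<notin> Cp i ` side E w b" using l3(2) by auto
  then have n3: "\<not> reach_in E0 (-{Cp i w}) (Cp i z1) l3" "\<not> reach_in E0 (-{Cp i w}) (Cp i z2) l3"
    using side_copy_closed[OF w(2) ab(1,4), where s="Cp i z1" and t=l3]
      side_copy_closed[OF w(2) ab(2,5), where s="Cp i z2" and t=l3]
      z1(1) z2(1) by auto
  have "z1 \<noteq> w" "z2 \<noteq> w" using side_not_centre[OF aw(1)] side_not_centre[OF aw(2)] z1(1) z2(1) by auto
  moreover have "Cp i z1 \<in> Lab" "Cp i z2 \<in> Lab" using lab z1 z2 by auto
  ultimately show ?thesis unfolding separates_three_def using l3 n12 n3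
    by (intro exI[of _ "Cp i z1"] exI[of _ "Cp i z2"] exI[of _ l3]) auto
qed

lemma r_subtree_self:
  assumes "w \<in> N" shows "w \<in> r_subtree N E {u,v} w"
proof -
  obtain p where p: "path_to_edge E p w {u,v}"
    using connected_path_to_edge[OF connected_NE assms uv_in_nodes(1), of "{u,v}"] by auto
  then have "w \<in> set p" using is_path_nonempty hd_in_set unfolding path_to_edge_def by metis
  then show ?thesis using p assms unfolding r_subtree_def by blast
qed

lemma leaf_r_subtree:
  assumes w: "w \<in> N" "nbrs E w = {a}"
  shows "r_subtree N E {u,v} w = {w}"
proof -
  have all: "reach_in E (-{w}) x c" if "x \<in> N" "x \<noteq> w" "c \<in> {u,v}" "c \<noteq> w" for x c
  proof -
    have "reach_in E UNIV x c" using connected_NE that uv_in_nodes unfolding connected_graph_def by auto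
    then show ?thesis using reach_in_avoid_leaf[OF w(2)] that by blast
  qed
  show ?thesis
  proof (cases "w = u")
    case False
    then show ?thesis using r_subtree_eq_u[OF w(1) False] all w(1) by auto
  next
    case True
    then have "w \<noteq> v" using u_neq_v by simp
    then show ?thesis using r_subtree_eq_v[OF w(1)] all w(1) by auto
  qed
qed

lemma r_subtree_mono_path:
  assumes x: "x \<in> N" and p: "path_to_edge E p x {u,v}" and z: "z \<in> set p"
  shows "r_subtree N E {u,v} x \<subseteq> r_subtree N E {u,v} z"
proof
  fix x' assume "x' \<in> r_subtree N E {u,v} x"
  then obtain q where q: "x' \<in> N" "path_to_edge E q x' {u,v}" "x \<in> set q" unfolding r_subtree_def by auto
  obtain q1 q2 where qq: "q = q1 @ x # q2" using q(3) by (meson split_list)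
  have "path_to_edge E (x # q2) x {u,v}" using path_to_edge_suffix[of E q1 x q2 x' "{u,v}"] q(2) qq by simp
  then have "x # q2 = p" using path_to_edge_unique[OF forest_E _ _ p] uv_edge u_neq_v by (simp add: adj_def)
  then have "z \<in> set q" using z qq by auto
  then show "x' \<in> r_subtree N E {u,v} z" using q unfolding r_subtree_def by auto
qed

end

section \<open>Edit sets of improvements\<close>

definition part :: "'v set \<Rightarrow> 'v set \<Rightarrow> 'v set \<Rightarrow> nat \<Rightarrow> 'v set" where
  "part C1 C2 C3 i = (if i = 1 then C1 else if i = 2 then C2 else C3)"

definition part_index :: "'v set \<Rightarrow> 'v set \<Rightarrow> 'v set \<Rightarrow> 'v \<Rightarrow> nat" where
  "part_index C1 C2 C3 e = (if e \<in> C1 then 1 else if e \<in> C2 then 2 else 3)"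

definition meets_two_parts :: "'v set \<Rightarrow> 'v set \<Rightarrow> 'v set \<Rightarrow> 'v set \<Rightarrow> bool" where
  "meets_two_parts S C1 C2 C3 \<longleftrightarrow>
     (S \<inter> C1 \<noteq> {} \<and> S \<inter> C2 \<noteq> {}) \<or> (S \<inter> C1 \<noteq> {} \<and> S \<inter> C3 \<noteq> {}) \<or> (S \<inter> C2 \<noteq> {} \<and> S \<inter> C3 \<noteq> {})"

lemma ref_label_eq: "ref_label L C1 C2 C3 e = Cp (part_index C1 C2 C3 e) (L e)"
  by (simp add: ref_label_def part_index_def)

lemma part_index_in: "part_index C1 C2 C3 e \<in> {1,2,3}"
  by (simp add: part_index_def)

lemma part_index_part: "e \<in> C1 \<union> C2 \<union> C3 \<Longrightarrow> e \<in> part C1 C2 C3 (part_index C1 C2 C3 e)"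
  by (auto simp: part_index_def part_def)

lemma part_index_unique: "C1 \<inter> C2 = {} \<Longrightarrow> C1 \<inter> C3 = {} \<Longrightarrow> C2 \<inter> C3 = {} \<Longrightarrow> i \<in> {1,2,3} \<Longrightarrow>
    e \<in> part C1 C2 C3 i \<Longrightarrow> part_index C1 C2 C3 e = i"
  by (auto simp: part_index_def part_def)

lemma part_in: "i \<in> {1,2,3} \<Longrightarrow> part C1 C2 C3 i \<in> {C1,C2,C3}"
  by (auto simp: part_def)

lemma edit_set_iff:
  "w \<in> edit_set V N E L r C1 C2 C3 \<longleftrightarrow> w \<in> N \<and> meets_two_parts (subtree_leaves N E L V r w) C1 C2 C3"
  by (simp add: edit_set_def meets_two_parts_def Let_def)

lemma meets_two_parts_mono: "meets_two_parts S C1 C2 C3 \<Longrightarrow> S \<subseteq> S' \<Longrightarrow> meets_two_parts S' C1 C2 C3"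
  unfolding meets_two_parts_def by blast

lemma meets_two_parts_two_elements:
  assumes "C1 \<inter> C2 = {}" "C1 \<inter> C3 = {}" "C2 \<inter> C3 = {}" "meets_two_parts S C1 C2 C3"
  obtains e1 e2 where "e1 \<in> S" "e2 \<in> S" "e1 \<noteq> e2"
proof -
  have "\<exists>A B. A \<inter> B = {} \<and> S \<inter> A \<noteq> {} \<and> S \<inter> B \<noteq> {}"
    using assms unfolding meets_two_parts_def by metis
  then obtain A B a b where "A \<inter> B = {}" "a \<in> S \<inter> A" "b \<in> S \<inter> B" by blast
  then show thesis using that[of a b] by blast
qed

lemma within_one_part:
  assumes "S \<subseteq> C1 \<union> C2 \<union> C3" "\<not> meets_two_parts S C1 C2 C3"
  obtains i where "i \<in> {1,2,3}" "S \<subseteq> part C1 C2 C3 i"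
proof -
  have "S \<subseteq> C1 \<or> S \<subseteq> C2 \<or> S \<subseteq> C3" using assms unfolding meets_two_parts_def by blast
  then show thesis using that[of 1] that[of 2] that[of 3] by (auto simp: part_def)
qed

locale edge_improvement =
  fixes V :: "'v set" and f :: "'v set \<Rightarrow> nat"
    and N :: "'n set" and E :: "'n set set" and L :: "'v \<Rightarrow> 'n"
    and u v :: 'n and C1 C2 C3 :: "'v set"
  assumes branch_dec: "branch_decomposition V N E L"
    and f_compl: "\<And>X. X \<subseteq> V \<Longrightarrow> f X = f (V - X)"
    and edge: "{u, v} \<in> E" "u \<noteq> v"
    and improvement: "improvement V f (closer_leaves E L V u v) C1 C2 C3"
begin

abbreviation "W \<equiv> closer_leaves E L V u v"
abbreviation "R \<equiv> edit_set V N E L {u, v} C1 C2 C3"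
abbreviation "leaves w \<equiv> subtree_leaves N E L V {u, v} w"
abbreviation "labels \<equiv> ref_label L C1 C2 C3 ` V"

lemma tree_NE: "is_tree N E"
  using branch_dec unfolding branch_decomposition_def by simp

sublocale tree_edge N E u v
  using tree_NE tree_forest tree_connected edge unfolding is_tree_def by unfold_locales auto

lemma degree_cases: "w \<in> N \<Longrightarrow> degree E w = 1 \<or> degree E w = 3"
  using branch_dec unfolding branch_decomposition_def by simp

lemma label_leaf: "e \<in> V \<Longrightarrow> L e \<in> N \<and> degree E (L e) = 1"
  using branch_dec unfolding branch_decomposition_def bij_betw_def by auto

lemma leaf_label: "z \<in> N \<Longrightarrow> degree E z = 1 \<Longrightarrow> z \<in> L ` V"
  using branch_dec unfolding branch_decomposition_def bij_betw_def by simp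

lemma inj_label: "inj_on L V"
  using branch_dec unfolding branch_decomposition_def bij_betw_def by auto

lemma parts_disjoint: "C1 \<inter> C2 = {}" "C1 \<inter> C3 = {}" "C2 \<inter> C3 = {}"
  and parts_cover: "C1 \<union> C2 \<union> C3 = V"
  using improvement unfolding improvement_def by auto

lemma closer_leaves_subset_V: "W \<subseteq> V"
  unfolding closer_leaves_def by auto

lemma part_inter_bounds:
  assumes "i \<in> {1,2,3}"
  shows "f (part C1 C2 C3 i \<inter> W) < f W" "f (part C1 C2 C3 i \<inter> (V - W)) < f W"
proof -
  have "\<forall>C\<in>{C1,C2,C3}. f (C \<inter> W) < f W \<and> f (C \<inter> (V - W)) < f W"
    using improvement by (simp add: improvement_def)
  then show "f (part C1 C2 C3 i \<inter> W) < f W" "f (part C1 C2 C3 i \<inter> (V - W)) < f W"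
    using part_in[OF assms, of C1 C2 C3] by auto
qed

lemma W_not_within_part:
  assumes "i \<in> {1,2,3}" shows "\<not> W \<subseteq> part C1 C2 C3 i"
proof
  assume "W \<subseteq> part C1 C2 C3 i"
  then have "part C1 C2 C3 i \<inter> W = W" by blast
  then show False using part_inter_bounds[OF assms] by simp
qed

lemma compl_W_not_within_part:
  assumes "i \<in> {1,2,3}" shows "\<not> V - W \<subseteq> part C1 C2 C3 i"
proof
  assume "V - W \<subseteq> part C1 C2 C3 i"
  then have "part C1 C2 C3 i \<inter> (V - W) = V - W" by blast
  then have "f (V - W) < f W" using part_inter_bounds[OF assms] by simp
  then show False using f_compl[OF closer_leaves_subset_V] by simp
qed

lemma leaves_eq: "leaves w = {e \<in> V. L e \<in> r_subtree N E {u,v} w}"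
  by (simp add: subtree_leaves_def)

lemma outside_edit_set_within_part:
  assumes "w \<in> N" "w \<notin> R"
  obtains i where "i \<in> {1,2,3}" "leaves w \<subseteq> part C1 C2 C3 i"
proof -
  have "leaves w \<subseteq> C1 \<union> C2 \<union> C3" using parts_cover leaves_eq by auto
  moreover have "\<not> meets_two_parts (leaves w) C1 C2 C3" using assms unfolding edit_set_iff by blast
  ultimately show thesis using within_one_part that by metis
qed

lemma edit_set_degree:
  assumes w: "w \<in> R" shows "degree E w = 3"
proof (rule ccontr)
  assume "degree E w \<noteq> 3"
  have wN: "w \<in> N" and m: "meets_two_parts (leaves w) C1 C2 C3" using w unfolding edit_set_iff by auto
  then have "degree E w = 1" using degree_cases[OF wN] \<open>degree E w \<noteq> 3\<close> by simp
  then obtain a where "nbrs E w = {a}" using degree_1_nbrs by metis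
  then have sub: "r_subtree N E {u,v} w = {w}" by (rule leaf_r_subtree[OF wN])
  obtain e1 e2 where e: "e1 \<in> leaves w" "e2 \<in> leaves w" "e1 \<noteq> e2"
    using meets_two_parts_two_elements[OF parts_disjoint m] .
  then have "L e1 = L e2" "e1 \<in> V" "e2 \<in> V" using sub leaves_eq by auto
  then show False using inj_onD[OF inj_label] e(3) by blast
qed

lemma edit_set_path_to_edge:
  assumes x: "x \<in> R" and p: "path_to_edge E p x {u,v}"
  shows "set p \<subseteq> R"
proof
  fix z assume z: "z \<in> set p"
  have xN: "x \<in> N" and mx: "meets_two_parts (leaves x) C1 C2 C3" using x unfolding edit_set_iff by auto
  have "z \<in> N" using path_in_nodes[OF graph_NE] p z xN unfolding path_to_edge_def by auto
  moreover have "leaves x \<subseteq> leaves z" using r_subtree_mono_path[OF xN p z] leaves_eq by auto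
  ultimately show "z \<in> R" using meets_two_parts_mono[OF mx] unfolding edit_set_iff by blast
qed

lemma closer_leaves_subset: "W \<subseteq> leaves u"
proof
  fix e assume e: "e \<in> W"
  then have eV: "e \<in> V" unfolding closer_leaves_def by auto
  obtain p where p: "path_betw E p (L e) u" and pmin: "\<forall>q. path_betw E q (L e) v \<longrightarrow> length p < length q"
    using e unfolding closer_leaves_def by auto
  have "L e \<in> r_subtree N E {u,v} u"
  proof (rule ccontr)
    assume "L e \<notin> r_subtree N E {u,v} u"
    then have h: "L e \<noteq> u" "reach_in E (-{u}) (L e) v"
      using r_subtree_eq_v[OF uv_in_nodes(1) u_neq_v] label_leaf[OF eV] by auto
    obtain q where q: "path_betw E q (L e) v" "set q \<subseteq> -{u}" using reach_in_imp_path[OF h(2)] h(1) by auto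
    have "adj E v u" using uv_edge u_neq_v by (auto simp: adj_def insert_commute)
    then have "is_path E (q @ [u])" using is_path_snoc[of E q u] q unfolding path_betw_def by auto
    moreover have "hd (q @ [u]) = hd p" "last (q @ [u]) = last p"
      using q(1) p is_path_nonempty[of E q] unfolding path_betw_def by (auto simp: hd_append)
    ultimately have "q @ [u] = p" using forest_path_unique[OF forest_E] p unfolding path_betw_def by blast
    then show False using pmin q by fastforce
  qed
  then show "e \<in> leaves u" using leaves_eq eV by auto
qed

lemma closer_leaves_compl_subset: "V - W \<subseteq> leaves v"
proof
  fix e assume e: "e \<in> V - W"
  then have eV: "e \<in> V" by auto
  have "L e \<in> r_subtree N E {u,v} v"
  proof (rule ccontr)
    assume "L e \<notin> r_subtree N E {u,v} v"
    then have h: "L e \<noteq> v" "reach_in E (-{v}) (L e) u"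
      using r_subtree_eq_u[OF uv_in_nodes(2)] u_neq_v label_leaf[OF eV] by auto
    obtain p where p: "path_betw E p (L e) u" "set p \<subseteq> -{v}" using reach_in_imp_path[OF h(2)] h(1) by auto
    have "adj E u v" using uv_edge u_neq_v by (auto simp: adj_def)
    then have pv: "is_path E (p @ [v])" using is_path_snoc[of E p v] p unfolding path_betw_def by auto
    have "length p < length q" if q: "path_betw E q (L e) v" for q
    proof -
      have "hd (p @ [v]) = hd q" "last (p @ [v]) = last q"
        using q p(1) is_path_nonempty[of E p] unfolding path_betw_def by (auto simp: hd_append)
      then have "p @ [v] = q" using forest_path_unique[OF forest_E pv] q unfolding path_betw_def by blast
      then show ?thesis by auto
    qed
    then have "e \<in> W" using p eV unfolding closer_leaves_def by auto
    then show False using e by auto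
  qed
  then show "e \<in> leaves v" using leaves_eq eV by auto
qed

lemma uv_in_edit_set: "u \<in> R" "v \<in> R"
proof -
  show "u \<in> R"
  proof (rule ccontr)
    assume "u \<notin> R"
    with uv_in_nodes(1) obtain i where "i \<in> {1,2,3}" "leaves u \<subseteq> part C1 C2 C3 i"
      by (rule outside_edit_set_within_part)
    then show False using closer_leaves_subset W_not_within_part by blast
  qed
  show "v \<in> R"
  proof (rule ccontr)
    assume "v \<notin> R"
    with uv_in_nodes(2) obtain i where "i \<in> {1,2,3}" "leaves v \<subseteq> part C1 C2 C3 i"
      by (rule outside_edit_set_within_part)
    then show False using closer_leaves_compl_subset compl_W_not_within_part by blast
  qed
qed

lemma edit_set_reach_u: "x \<in> R \<Longrightarrow> reach_in E R x u"
proof -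
  assume x: "x \<in> R"
  then have xN: "x \<in> N" unfolding edit_set_iff by simp
  obtain p where p: "path_to_edge E p x {u,v}"
    using connected_path_to_edge[OF connected_NE xN uv_in_nodes(1), of "{u,v}"] by auto
  have pR: "set p \<subseteq> R" using edit_set_path_to_edge[OF x p] .
  have "reach_in E R x (last p)"
    using reach_in_path_set[of E p] p reach_in_mono[OF _ order_refl pR] unfolding path_to_edge_def by auto
  moreover have "reach_in E R (last p) u"
  proof (cases "last p = u")
    case False
    then have "last p = v" using p unfolding path_to_edge_def by auto
    then show ?thesis using uv_edge u_neq_v uv_in_edit_set by (intro reach_in_edge) (auto simp: adj_def insert_commute)
  qed simp
  ultimately show ?thesis by (rule reach_in_trans)
qed

lemma edit_set_connected:
  assumes "x \<in> R" "y \<in> R" shows "\<exists>p. path_betw E p x y \<and> set p \<subseteq> R"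
proof -
  have "reach_in E R x y"
    using edit_set_reach_u[OF assms(1)] reach_in_sym[OF edit_set_reach_u[OF assms(2)]] by (rule reach_in_trans)
  then show ?thesis using assms(1) by (rule reach_in_imp_path)
qed

lemma labels_in_init_nodes: "\<forall>l\<in>labels. l \<in> N0 \<and> card (nbrs E0 l) \<le> 1"
proof
  fix l assume "l \<in> labels"
  then obtain e where e: "e \<in> V" "l = Cp (part_index C1 C2 C3 e) (L e)" by (auto simp: ref_label_eq)
  obtain a where a: "nbrs E (L e) = {a}" using label_leaf[OF e(1)] degree_1_nbrs by metis
  have "L e \<in> N" using label_leaf[OF e(1)] by simp
  then show "l \<in> N0 \<and> card (nbrs E0 l) \<le> 1"
    using in_init_nodes(1)[OF part_index_in[of C1 C2 C3 e]] leaf_copy_card_nbrs[OF a part_index_in[of C1 C2 C3 e]] e(2)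
    by simp
qed

lemma label_outside_part:
  assumes "i \<in> {1,2,3}" obtains e where "e \<in> V" "part_index C1 C2 C3 e \<noteq> i"
proof -
  obtain e where e: "e \<in> W" "e \<notin> part C1 C2 C3 i" using W_not_within_part[OF assms] by auto
  have eV: "e \<in> V" using e(1) closer_leaves_subset_V by auto
  then have "e \<in> C1 \<union> C2 \<union> C3" using parts_cover by simp
  then have "e \<in> part C1 C2 C3 (part_index C1 C2 C3 e)" by (rule part_index_part)
  then have "part_index C1 C2 C3 e \<noteq> i" using e(2) by auto
  with eV show thesis by (rule that)
qed

lemma labels_within_part:
  assumes "leaves w \<subseteq> part C1 C2 C3 i" "i \<in> {1,2,3}" "e \<in> leaves w"
  shows "ref_label L C1 C2 C3 e = Cp i (L e)"
  using part_index_unique[OF parts_disjoint assms(2)] assms(1,3) by (auto simp: ref_label_eq)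

lemma inner_copy_separates_labels:
  assumes w: "w \<in> N" "w \<notin> R" "degree E w = 3" and i: "i \<in> {1,2,3}" "leaves w \<subseteq> part C1 C2 C3 i"
  shows "separates_three E0 labels (Cp i w)"
proof -
  have wuv: "w \<notin> {u,v}" using w(2) uv_in_edit_set by auto
  have lab: "\<forall>z\<in>N. card (nbrs E z) \<le> 1 \<longrightarrow> z \<in> r_subtree N E {u,v} w \<longrightarrow> Cp i z \<in> labels"
  proof (intro ballI impI)
    fix z assume z: "z \<in> N" "card (nbrs E z) \<le> 1" "z \<in> r_subtree N E {u,v} w"
    then have "degree E z = 1" using degree_cases unfolding degree_def by fastforce
    then obtain e where e: "e \<in> V" "L e = z" using leaf_label z(1) by blast
    then have "e \<in> leaves w" using leaves_eq z by auto
    then show "Cp i z \<in> labels" using labels_within_part[OF i(2,1)] e by force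
  qed
  obtain e3 where e3: "e3 \<in> V" "part_index C1 C2 C3 e3 \<noteq> i" using label_outside_part[OF i(1)] .
  have l3: "ref_label L C1 C2 C3 e3 \<in> labels" "ref_label L C1 C2 C3 e3 \<notin> range (Cp i)"
    using e3 by (auto simp: ref_label_eq)
  show ?thesis
    using inner_copy_separates_three[OF w(1) wuv _ i(1) lab l3] w(3) unfolding degree_def by simp
qed

lemma refinement_inv:
  assumes "refinement V N E L u v C1 C2 C3 N' E'"
  shows "reduction_inv labels N0 E0 N' E'"
    and "\<And>w i. w \<in> N \<Longrightarrow> w \<notin> R \<Longrightarrow> i \<in> {1,2,3} \<Longrightarrow> leaves w \<subseteq> part C1 C2 C3 i \<Longrightarrow> Cp i w \<in> N'"
proof -
  define Sep where "Sep = {Cp i w | w i. w \<in> N \<and> w \<notin> R \<and> degree E w = 3 \<and> i \<in> {1,2,3} \<and>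
      leaves w \<subseteq> part C1 C2 C3 i}"
  have steps: "(reduce_step labels)\<^sup>*\<^sup>* (N0, E0) (N', E')"
    using assms unfolding refinement_def Let_def by simp
  have "Sep \<subseteq> N0" unfolding Sep_def using in_init_nodes(1) by auto
  moreover have "\<forall>y\<in>Sep. separates_three E0 labels y"
    unfolding Sep_def using inner_copy_separates_labels by blast
  ultimately have inv: "reduction_inv labels N0 E0 N' E'" and "Sep \<subseteq> N'"
    using reduce_steps_inv[OF steps init_graph init_forest init_connected labels_in_init_nodes] by auto
  then show "reduction_inv labels N0 E0 N' E'" by simp
  fix w i assume w: "w \<in> N" "w \<notin> R" and i: "i \<in> {1,2,3}" "leaves w \<subseteq> part C1 C2 C3 i"
  show "Cp i w \<in> N'"
  proof (cases "degree E w = 3")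
    case True
    then show ?thesis using \<open>Sep \<subseteq> N'\<close> w i unfolding Sep_def by blast
  next
    case False
    then have "degree E w = 1" using degree_cases w(1) by blast
    then obtain e where e: "e \<in> V" "L e = w" using leaf_label w(1) by blast
    then have "e \<in> leaves w" using leaves_eq r_subtree_self w(1) by auto
    then have "ref_label L C1 C2 C3 e = Cp i w" using labels_within_part[OF i(2,1)] e(2) by simp
    then show ?thesis using inv e(1) unfolding reduction_inv_def by force
  qed
qed

lemma refinement_cross_edge:
  assumes ref: "refinement V N E L u v C1 C2 C3 N' E'"
  shows "\<exists>r'\<in>E'. \<forall>i. \<not> r' \<subseteq> range (Cp i)"
proof (rule ccontr)
  assume "\<not> (\<exists>r'\<in>E'. \<forall>i. \<not> r' \<subseteq> range (Cp i))"
  then have within: "\<exists>i. r' \<subseteq> range (Cp i)" if "r' \<in> E'" for r' using that by blast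
  obtain e0 where e0: "e0 \<in> V" using closer_leaves_subset_V W_not_within_part[of 1] by blast
  let ?i0 = "part_index C1 C2 C3 e0"
  obtain e1 where e1: "e1 \<in> V" "part_index C1 C2 C3 e1 \<noteq> ?i0" using label_outside_part[OF part_index_in] .
  let ?l0 = "ref_label L C1 C2 C3 e0" and ?l1 = "ref_label L C1 C2 C3 e1"
  have inv: "reduction_inv labels N0 E0 N' E'" using refinement_inv(1)[OF ref] .
  then have "?l0 \<in> N'" "?l1 \<in> N'" using e0 e1 unfolding reduction_inv_def by auto
  then have r: "reach_in E' UNIV ?l0 ?l1"
    using reduction_inv_connected[OF inv init_connected] unfolding connected_graph_def by blast
  have "?l1 \<in> range (Cp ?i0)"
  proof (rule reach_in_closed[OF r])
    show "?l0 \<in> range (Cp ?i0)" by (simp add: ref_label_eq)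
    fix s t assume h: "adj E' s t" "s \<in> UNIV" "t \<in> UNIV" "s \<in> range (Cp ?i0)"
    obtain k where k: "{s,t} \<subseteq> range (Cp k)" using within h(1) unfolding adj_def by blast
    then have "k = ?i0" using h(4) by auto
    then show "t \<in> range (Cp ?i0)" using k by auto
  qed
  then show False using e1(2) by (auto simp: ref_label_eq)
qed

lemma refinement_subtree_leaves:
  assumes ref: "refinement V N E L u v C1 C2 C3 N' E'"
    and r': "r' \<in> E'" "\<forall>j. \<not> r' \<subseteq> range (Cp j)"
    and w: "w \<in> N" "w \<notin> R" and i: "i \<in> {1,2,3}" "leaves w \<subseteq> part C1 C2 C3 i"
  shows "leaves w = subtree_leaves N' E' (ref_label L C1 C2 C3) V r' (Cp i w)"
proof -
  have inv: "reduction_inv labels N0 E0 N' E'" using refinement_inv(1)[OF ref] .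
  then have G': "is_graph N' E'" and F': "forest E'" and N'0: "N' \<subseteq> N0"
    and RR: "\<And>Y p q. Y \<subseteq> N' \<Longrightarrow> p \<in> N' \<Longrightarrow> q \<in> N' \<Longrightarrow>
        (reach_in E' (-Y) p q \<longleftrightarrow> reach_in E0 (-Y) p q)"
    and labN': "\<And>e. e \<in> V \<Longrightarrow> ref_label L C1 C2 C3 e \<in> N'"
    unfolding reduction_inv_def by auto
  have C': "connected_graph N' E'" using reduction_inv_connected[OF inv init_connected] .
  define y where "y = Cp i w"
  have yN': "y \<in> N'" using refinement_inv(2)[OF ref w i] unfolding y_def .
  have wuv: "w \<notin> {u,v}" using w(2) uv_in_edit_set by auto
  obtain c' where c': "c' \<in> r'" "c' \<notin> range (Cp i)" using r'(2) by blast
  obtain d' where rcd: "r' = {c', d'}" "c' \<noteq> d'"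
    using G' r'(1) c'(1) unfolding is_graph_def by (metis doubleton_eq_iff insertE singletonD)
  have c'N: "c' \<in> N'" using G' r'(1) rcd adj_in_nodes[of N' E' c' d'] by (simp add: adj_def)
  have sub': "r_subtree N' E' r' y = {x \<in> N'. x = y \<or> \<not> reach_in E' (-{y}) x c'}"
    using r_subtree_eq[OF G' F' C' _ rcd(2) yN'] r'(1) rcd(1) c'(2) unfolding y_def by auto
  have "ref_label L C1 C2 C3 e \<in> r_subtree N' E' r' y \<longleftrightarrow> e \<in> leaves w" if e: "e \<in> V" for e
  proof -
    let ?l = "ref_label L C1 C2 C3 e"
    have lN': "?l \<in> N'" using labN'[OF e] .
    have "?l \<in> r_subtree N' E' r' y \<longleftrightarrow> ?l = y \<or> \<not> reach_in E0 (-{y}) ?l c'"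
      using sub' lN' RR[of "{y}" ?l c'] yN' c'N by auto
    also have "\<dots> \<longleftrightarrow> ?l \<in> Cp i ` r_subtree N E {u,v} w"
      using reach_in_avoiding_copy_iff[OF w(1) wuv i(1), of ?l c'] lN' N'0 c'N c'(2)
        r_subtree_self[OF w(1)] unfolding y_def by blast
    also have "\<dots> \<longleftrightarrow> e \<in> leaves w"
      using labels_within_part[OF i(2,1)] e leaves_eq by (auto simp: ref_label_eq)
    finally show ?thesis .
  qed
  then show ?thesis unfolding subtree_leaves_def y_def using leaves_eq by auto
qed

lemma refinement_preserves_subtree_leaves:
  assumes ref: "refinement V N E L u v C1 C2 C3 N' E'"
  shows "\<exists>r'\<in>E'. \<forall>w\<in>N - R. \<exists>w'\<in>N'. leaves w = subtree_leaves N' E' (ref_label L C1 C2 C3) V r' w'"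
proof -
  obtain r' where r': "r' \<in> E'" "\<forall>j. \<not> r' \<subseteq> range (Cp j)" using refinement_cross_edge[OF ref] by blast
  have "\<exists>w'\<in>N'. leaves w = subtree_leaves N' E' (ref_label L C1 C2 C3) V r' w'" if w: "w \<in> N" "w \<notin> R" for w
  proof -
    obtain i where i: "i \<in> {1,2,3}" "leaves w \<subseteq> part C1 C2 C3 i"
      using outside_edit_set_within_part[OF w] .
    show ?thesis using refinement_inv(2)[OF ref w i] refinement_subtree_leaves[OF ref r' w i] by blast
  qed
  then show ?thesis using r'(1) by blast
qed

end

theorem lemma12:
  fixes V :: "'v set" and f :: "'v set \<Rightarrow> nat"
    and N :: "'n set" and E :: "'n set set" and L :: "'v \<Rightarrow> 'n"
    and u v :: 'n and C1 C2 C3 :: "'v set"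
    and R :: "'n set" and N' :: "'n rnode set" and E' :: "'n rnode set set"
  assumes "finite V"
    and "connectivity_function V f"
    and "branch_decomposition V N E L"
    and "{u, v} \<in> E"
    and "global_T_improvement V f N E L u v C1 C2 C3"
    and "R = edit_set V N E L {u, v} C1 C2 C3"
    and "refinement V N E L u v C1 C2 C3 N' E'"
  shows "(\<forall>w\<in>R. degree E w = 3)
    \<and> (\<forall>x\<in>R. \<forall>y\<in>R. \<exists>p. path_betw E p x y \<and> set p \<subseteq> R)
    \<and> (\<exists>r'\<in>E'. \<forall>w\<in>N - R. \<exists>w'\<in>N'.
          subtree_leaves N E L V {u, v} w = subtree_leaves N' E' (ref_label L C1 C2 C3) V r' w')"
proof -
  have "T_improvement V f E L u v C1 C2 C3"
    using assms(5) unfolding global_T_improvement_def by simp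
  then have improvement: "edge_improvement V f N E L u v C1 C2 C3"
    using assms(2,3) unfolding edge_improvement_def T_improvement_def min_improvement_def
      connectivity_function_def by blast
  show ?thesis
    unfolding assms(6)
    using edge_improvement.edit_set_degree[OF improvement]
      edge_improvement.edit_set_connected[OF improvement]
      edge_improvement.refinement_preserves_subtree_leaves[OF improvement assms(7)]
    by blast
qed

end
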